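(* Let $k,n\in\mathbb{N}$ and let $\mathbf{E}$ be an ideal cipher, i.e. drawn uniformly from $\mathsf{Ics}(k,n)$. Let $\mathcal{A}$ be a quantum adversary that makes at most $p$ quantum queries in total to the ideal-cipher oracles $\mathbf{E},\mathbf{E}^{-1}$, and at most $q$ classical, non-adaptive queries in total to the construction oracles $\textsc{Ev},\textsc{Inv}$. Then \[\mathsf{Adv}^{\mathsf{sprp}\text{-}\mathsf{na}}_{\mathsf{FX}}(\mathcal{A})\le\sqrt{8p^2q/2^{k+n}}.\]
   Context: $\mathsf{Ics}(k,n)$ is the set of all functions $\mathbf{E}:\{0,1\}^k\times\{0,1\}^n\to\{0,1\}^n$ such that each $\mathbf{E}_K=\mathbf{E}(K,\cdot)$ is a permutation of $\{0,1\}^n$. Quantum access to $\mathbf{E}$ is the unitary $|K,x,y\rangle\mapsto|K,x,y\oplus\mathbf{E}_K(x)\rangle$, and similarly for $\mathbf{E}^{-1}$. The FX blockcipher with key $K_1\|K_2\in\{0,1\}^k\times\{0,1\}^n$ is $\mathsf{FX}[\mathbf{E}](K_1\|K_2,x)=\mathbf{E}_{K_1}(x\oplus K_2)\oplus K_2$. Its inverse is $\mathsf{FX}[\mathbf{E}]^{-1}(K_1\|K_2,y)=\mathbf{E}^{-1}_{K_1}(y\oplus K_2)\oplus K_2$. The SPRP game with bit $b\in\{0,1\}$ samples $\mathbf{E}$ uniformly from $\mathsf{Ics}(k,n)$, samples a uniform key $K_1\|K_2$, and samples an independent uniform permutation $P$ of $\{0,1\}^n$. The adversary gets quantum access to $\mathbf{E},\mathbf{E}^{-1}$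 and access to $\textsc{Ev},\textsc{Inv}$: - if $b=1$, $\textsc{Ev}$ returns $\mathsf{FX}[\mathbf{E}](K_1\|K_2,\cdot)$ and $\textsc{Inv}$ returns its inverse; - if $b=0$, $\textsc{Ev}$ returns $P$ and $\textsc{Inv}$ returns $P^{-1}$. The adversary outputs a bit. The advantage is $\Pr[\mathcal{A}\text{ outputs }1\mid b=1]-\Pr[\mathcal{A}\text{ outputs }1\mid b=0]$. Classical, non-adaptive queries means the following. There are fixed strings $M_1,\dots,M_{q'},Y_{q'+1},\dots,Y_q\in\{0,1\}^n$, determined before execution, such that $\mathcal{A}$ queries $\textsc{Ev}$ only on the $M_i$ and $\textsc{Inv}$ only on the $Y_i$. These queries are classical, i.e. not made in superposition. The advantage of such adversaries is denoted $\mathsf{Adv}^{\mathsf{sprp}\text{-}\mathsf{na}}_{\mathsf{FX}}$. *)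

theory Defs
  imports Complex_Main "HOL-Combinatorics.Permutations"
begin

text \<open>A bit string in {0,1}^n is encoded as a natural number below 2^n;
  the XOR of bit strings is bitwise xor on nat.\<close>

definition bits :: "nat \<Rightarrow> nat set" where
  "bits n = {..<2^n}"

text \<open>To obtain a finite set (so that uniform sampling makes sense) the
  functions are extensional: E K = id for out-of-range keys (and permutes forces
  E K x = x for out-of-range x).\<close>

definition Ics :: "nat \<Rightarrow> nat \<Rightarrow> (nat \<Rightarrow> nat \<Rightarrow> nat) set" where
  "Ics k n = {E. (\<forall>K. (K < 2^k \<longrightarrow> E K permutes bits n) \<and> (\<not> K < 2^k \<longrightarrow> E K = id))}"

definition Perms :: "nat \<Rightarrow> (nat \<Rightarrow> nat) set" where
  "Perms n = {P. P permutes bits n}"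

definition FX :: "(nat \<Rightarrow> nat \<Rightarrow> nat) \<Rightarrow> nat \<Rightarrow> nat \<Rightarrow> nat \<Rightarrow> nat" where
  "FX E K1 K2 x = xor (E K1 (xor x K2)) K2"

definition FX_inv :: "(nat \<Rightarrow> nat \<Rightarrow> nat) \<Rightarrow> nat \<Rightarrow> nat \<Rightarrow> nat \<Rightarrow> nat" where
  "FX_inv E K1 K2 y = xor (inv (E K1) (xor y K2)) K2"

text \<open>The adversary's computational basis consists of a key register K (k bits),
  an input register x (n bits), an output register y (n bits) and an arbitrary
  finite workspace 'w.  A state is an amplitude function on the basis; only
  amplitudes on valid basis states (registers in range) are ever used.\<close>

type_synonym 'w basis = "nat \<times> nat \<times> nat \<times> 'w"
type_synonym 'w qstate = "'w basis \<Rightarrow> complex"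

definition valid :: "nat \<Rightarrow> nat \<Rightarrow> 'w basis set" where
  "valid k n = {(K, x, y, w). K < 2^k \<and> x < 2^n \<and> y < 2^n}"

text \<open>Since the list of operations is fixed before execution, the
  classical queries are non-adaptive.\<close>

datatype 'w op =
    Unitary "'w basis \<Rightarrow> 'w basis \<Rightarrow> complex"
  | QueryE
  | QueryEinv
  | ClassEv nat
  | ClassInv nat

definition apply_mat :: "nat \<Rightarrow> nat \<Rightarrow> (('w::finite) basis \<Rightarrow> 'w basis \<Rightarrow> complex)
    \<Rightarrow> 'w qstate \<Rightarrow> 'w qstate" where
  "apply_mat k n U \<psi> = (\<lambda>b. \<Sum>b'\<in>valid k n. U b b' * \<psi> b')"

definition is_unitary :: "nat \<Rightarrow> nat \<Rightarrow> (('w::finite) basis \<Rightarrow> 'w basis \<Rightarrow> complex) \<Rightarrow> bool" where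
  "is_unitary k n U \<longleftrightarrow>
     (\<forall>a\<in>valid k n. \<forall>a'\<in>valid k n.
        (\<Sum>b\<in>valid k n. cnj (U b a) * U b a') = (if a = a' then 1 else 0)) \<and>
     (\<forall>a\<in>valid k n. \<forall>a'\<in>valid k n.
        (\<Sum>b\<in>valid k n. U a b * cnj (U a' b)) = (if a = a' then 1 else 0))"

definition apply_oracle :: "(nat \<Rightarrow> nat \<Rightarrow> nat) \<Rightarrow> 'w qstate \<Rightarrow> 'w qstate" where
  "apply_oracle f \<psi> = (\<lambda>(K, x, y, w). \<psi> (K, x, xor y (f K x), w))"

definition apply_const :: "nat \<Rightarrow> 'w qstate \<Rightarrow> 'w qstate" where
  "apply_const a \<psi> = (\<lambda>(K, x, y, w). \<psi> (K, x, xor y a, w))"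

fun step :: "nat \<Rightarrow> nat \<Rightarrow> (nat \<Rightarrow> nat \<Rightarrow> nat) \<Rightarrow> (nat \<Rightarrow> nat) \<Rightarrow> (nat \<Rightarrow> nat)
    \<Rightarrow> ('w::finite) op \<Rightarrow> 'w qstate \<Rightarrow> 'w qstate" where
  "step k n E Ev Inv (Unitary U) \<psi> = apply_mat k n U \<psi>"
| "step k n E Ev Inv QueryE \<psi> = apply_oracle E \<psi>"
| "step k n E Ev Inv QueryEinv \<psi> = apply_oracle (\<lambda>K. inv (E K)) \<psi>"
| "step k n E Ev Inv (ClassEv m) \<psi> = apply_const (Ev m) \<psi>"
| "step k n E Ev Inv (ClassInv y) \<psi> = apply_const (Inv y) \<psi>"

definition run :: "nat \<Rightarrow> nat \<Rightarrow> (nat \<Rightarrow> nat \<Rightarrow> nat) \<Rightarrow> (nat \<Rightarrow> nat) \<Rightarrow> (nat \<Rightarrow> nat)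
    \<Rightarrow> ('w::finite) op list \<Rightarrow> 'w qstate \<Rightarrow> 'w qstate" where
  "run k n E Ev Inv ops \<psi>0 = fold (step k n E Ev Inv) ops \<psi>0"

definition init_state :: "'w \<Rightarrow> 'w qstate" where
  "init_state w0 = (\<lambda>b. if b = (0, 0, 0, w0) then 1 else 0)"

definition accept_prob :: "nat \<Rightarrow> nat \<Rightarrow> (nat \<Rightarrow> nat \<Rightarrow> nat) \<Rightarrow> (nat \<Rightarrow> nat) \<Rightarrow> (nat \<Rightarrow> nat)
    \<Rightarrow> 'w \<Rightarrow> ('w::finite) op list \<Rightarrow> ('w basis \<Rightarrow> bool) \<Rightarrow> real" where
  "accept_prob k n E Ev Inv w0 ops acc =
     (\<Sum>b\<in>{b\<in>valid k n. acc b}. (cmod (run k n E Ev Inv ops (init_state w0) b))^2)"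

definition wf_adv :: "nat \<Rightarrow> nat \<Rightarrow> ('w::finite) op list \<Rightarrow> bool" where
  "wf_adv k n ops \<longleftrightarrow>
     (\<forall>c\<in>set ops. (\<forall>U. c = Unitary U \<longrightarrow> is_unitary k n U) \<and>
                  (\<forall>m. c = ClassEv m \<longrightarrow> m < 2^n) \<and>
                  (\<forall>y. c = ClassInv y \<longrightarrow> y < 2^n))"

definition num_quantum :: "'w op list \<Rightarrow> nat" where
  "num_quantum ops = length (filter (\<lambda>c. c = QueryE \<or> c = QueryEinv) ops)"

definition num_classical :: "'w op list \<Rightarrow> nat" where
  "num_classical ops = length (filter (\<lambda>c. case c of ClassEv _ \<Rightarrow> True | ClassInv _ \<Rightarrow> True | _ \<Rightarrow> False) ops)"

definition adv_sprp_na_FX :: "nat \<Rightarrow> nat \<Rightarrow> ('w::finite) \<Rightarrow> 'w op list \<Rightarrow> ('w basis \<Rightarrow> bool) \<Rightarrow> real" where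
  "adv_sprp_na_FX k n w0 ops acc =
     (\<Sum>E\<in>Ics k n. \<Sum>K1\<in>bits k. \<Sum>K2\<in>bits n.
        accept_prob k n E (FX E K1 K2) (FX_inv E K1 K2) w0 ops acc)
       / (real (card (Ics k n)) * 2^k * 2^n)
   - (\<Sum>E\<in>Ics k n. \<Sum>P\<in>Perms n.
        accept_prob k n E P (inv P) w0 ops acc)
       / (real (card (Ics k n)) * real (card (Perms n)))"

end

(*
  Fix the FX key (K1, K2) and an ideal-world pair (E, P).  Reprogramming the single permutation
  E_K1 by at most q transpositions yields a cipher E' for which FX[E'](K1, K2) answers the
  adversary's classical queries exactly like P.  Since these queries are fixed in advance,
  averaging over P maps the uniform distribution of E to that of E' (a coupling), so the real
  world is the ideal world run with E' in place of E.

  E' differs from E only at the inputs (K1, u xor K2) and (K1, E_K1^-1 (v xor K2)), where (u, v)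
  ranges over the q input/output pairs of P revealed by the classical queries.  By the hybrid
  argument each of the p quantum queries moves the state by at most 2 sqrt(w), w being the weight
  of the current state on these inputs; summed over all 2^(k+n) keys these weights are at most 2q,
  so by Cauchy-Schwarz the average displacement is at most 2 p sqrt(2q / 2^(k+n)).  Finally, a
  displacement of norm d between unit vectors changes an acceptance probability by at most d.
*)

theory Submission
  imports Defs "HOL-Analysis.L2_Norm"
begin

lemma bits_iff [simp]: "x \<in> bits n \<longleftrightarrow> x < 2^n"
  by (simp add: bits_def)

lemma finite_bits [simp]: "finite (bits n)"
  by (simp add: bits_def)

lemma card_bits: "card (bits n) = 2^n"
  by (simp add: bits_def)

lemma xor_nat_less_exp:
  assumes "(a::nat) < 2^n" "b < 2^n"
  shows "xor a b < 2^n"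
proof -
  have "take_bit n a = a" "take_bit n b = b"
    using assms by (simp_all add: take_bit_nat_eq_self_iff)
  then have "xor a b = take_bit n (xor a b)" by (metis take_bit_xor)
  then show ?thesis by (metis take_bit_nat_less_exp)
qed

lemma xor_cancel_right [simp]: "xor (xor (a::nat) b) b = a"
  by (simp add: xor.assoc)

lemma xor_eq_iff: "a = xor b c \<longleftrightarrow> xor a c = (b::nat)"
  by (metis xor_cancel_right)

lemma bij_betw_xor_bits: "u < 2^n \<Longrightarrow> bij_betw (\<lambda>K. xor u K) (bits n) (bits n)"
  by (rule bij_betw_byWitness[where f'="\<lambda>K. xor u K"])
     (auto simp: xor_nat_less_exp xor.assoc[symmetric])

lemma permutes_bits_less: "\<rho> permutes bits n \<Longrightarrow> x < 2^n \<Longrightarrow> \<rho> x < 2^n"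
  using permutes_in_image[of \<rho> "bits n" x] by simp

lemma permutes_bits_inv_less: "\<rho> permutes bits n \<Longrightarrow> x < 2^n \<Longrightarrow> inv \<rho> x < 2^n"
  using permutes_bits_less[OF permutes_inv] by blast

lemma finite_Perms [simp]: "finite (Perms n)"
  unfolding Perms_def by (rule finite_permutations) simp

lemma Ics_permutes: "E \<in> Ics k n \<Longrightarrow> K < 2^k \<Longrightarrow> E K permutes bits n"
  by (simp add: Ics_def)

lemma Ics_update: "E \<in> Ics k n \<Longrightarrow> K < 2^k \<Longrightarrow> \<sigma> permutes bits n \<Longrightarrow> E(K := \<sigma>) \<in> Ics k n"
  by (auto simp: Ics_def)

lemma finite_Ics [simp]: "finite (Ics k n)"
proof -
  let ?ext = "\<lambda>f K. if K < 2^k then f K else id"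
  have "Ics k n \<subseteq> ?ext ` (PiE {..<2^k} (\<lambda>_. Perms n))"
  proof
    fix E assume E: "E \<in> Ics k n"
    then have "E = ?ext (restrict E {..<2^k})" "restrict E {..<2^k} \<in> PiE {..<2^k} (\<lambda>_. Perms n)"
      by (auto simp: Ics_def Perms_def fun_eq_iff)
    then show "E \<in> ?ext ` (PiE {..<2^k} (\<lambda>_. Perms n))" by blast
  qed
  moreover have "finite (PiE {..<(2::nat)^k} (\<lambda>_. Perms n))" by (rule finite_PiE) auto
  ultimately show ?thesis using finite_subset by blast
qed

lemma card_Ics_pos: "card (Ics k n) > 0"
proof -
  have "(\<lambda>_. id) \<in> Ics k n" by (simp add: Ics_def)
  then show ?thesis by (auto simp: card_gt_0_iff)
qed

lemma card_Perms_pos: "card (Perms n) > 0"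
proof -
  have "id \<in> Perms n" by (simp add: Perms_def)
  then show ?thesis by (auto simp: card_gt_0_iff)
qed

section \<open>Norms of states and the hybrid argument\<close>

lemma valid_eq: "valid k n = {..<(2::nat)^k} \<times> {..<(2::nat)^n} \<times> {..<(2::nat)^n} \<times> (UNIV::'w set)"
  by (auto simp: valid_def)

lemma finite_valid [simp]: "finite (valid k n :: ('w::finite) basis set)"
  unfolding valid_eq by simp

definition qnorm :: "nat \<Rightarrow> nat \<Rightarrow> ('w::finite) qstate \<Rightarrow> real" where
  "qnorm k n \<psi> = L2_set (\<lambda>b. cmod (\<psi> b)) (valid k n)"

lemma qnorm_nonneg: "0 \<le> qnorm k n \<psi>"
  by (simp add: qnorm_def)

lemma qnorm_square: "(qnorm k n \<psi>)^2 = (\<Sum>b\<in>valid k n. (cmod (\<psi> b))^2)"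
  by (simp add: qnorm_def L2_set_def sum_nonneg)

lemma qnorm_zero: "qnorm k n (\<lambda>b. 0) = 0"
  by (simp add: qnorm_def L2_set_def)

lemma qnorm_triangle: "qnorm k n (\<lambda>b. \<psi> b + \<phi> b) \<le> qnorm k n \<psi> + qnorm k n \<phi>"
proof -
  have "qnorm k n (\<lambda>b. \<psi> b + \<phi> b) \<le> L2_set (\<lambda>b. cmod (\<psi> b) + cmod (\<phi> b)) (valid k n)"
    unfolding qnorm_def by (rule L2_set_mono) (auto simp: norm_triangle_ineq)
  also have "\<dots> \<le> qnorm k n \<psi> + qnorm k n \<phi>"
    unfolding qnorm_def by (rule L2_set_triangle_ineq)
  finally show ?thesis .
qed

lemma qnorm_init_state: "qnorm k n (init_state w0 :: ('w::finite) qstate) = 1"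
proof -
  have "(0, 0, 0, w0) \<in> valid k n" by (simp add: valid_def)
  then have "(\<Sum>b\<in>valid k n. (cmod (init_state w0 b))^2) = 1"
    by (simp add: init_state_def if_distrib[of "\<lambda>z. (cmod z)^2"] cong: if_cong)
  then show ?thesis unfolding qnorm_def L2_set_def by simp
qed

lemma qnorm_apply_mat:
  fixes U :: "('w::finite) basis \<Rightarrow> 'w basis \<Rightarrow> complex"
  assumes "is_unitary k n U"
  shows "qnorm k n (apply_mat k n U \<psi>) = qnorm k n \<psi>"
proof -
  let ?V = "valid k n :: 'w basis set"
  have columns: "(\<Sum>b\<in>?V. cnj (U b a) * U b a') = (if a = a' then 1 else 0)"
    if "a \<in> ?V" "a' \<in> ?V" for a a'
    using assms that unfolding is_unitary_def by blast
  have "(\<Sum>b\<in>?V. (\<Sum>b'\<in>?V. U b b' * \<psi> b') * cnj (\<Sum>b''\<in>?V. U b b'' * \<psi> b''))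
      = (\<Sum>b\<in>?V. \<Sum>b''\<in>?V. \<Sum>b'\<in>?V. \<psi> b' * cnj (\<psi> b'') * (cnj (U b b'') * U b b'))"
    by (simp add: sum_distrib_left sum_distrib_right algebra_simps)
  also have "\<dots> = (\<Sum>b'\<in>?V. \<Sum>b''\<in>?V. \<psi> b' * cnj (\<psi> b'') * (\<Sum>b\<in>?V. cnj (U b b'') * U b b'))"
    by (subst sum.swap, subst (2) sum.swap, subst sum.swap) (simp add: sum_distrib_left)
  also have "\<dots> = (\<Sum>b'\<in>?V. \<psi> b' * cnj (\<psi> b'))"
    by (simp add: columns if_distrib cong: if_cong)
  finally have "complex_of_real (\<Sum>b\<in>?V. (cmod (apply_mat k n U \<psi> b))^2)
      = complex_of_real (\<Sum>b\<in>?V. (cmod (\<psi> b))^2)"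
    unfolding of_real_sum complex_norm_square apply_mat_def by simp
  then show ?thesis
    unfolding qnorm_def L2_set_def of_real_eq_iff by simp
qed

definition xor_output :: "(nat \<Rightarrow> nat \<Rightarrow> nat) \<Rightarrow> 'w basis \<Rightarrow> 'w basis" where
  "xor_output f = (\<lambda>(K, x, y, w). (K, x, xor y (f K x), w))"

definition oracle_on_bits :: "nat \<Rightarrow> nat \<Rightarrow> (nat \<Rightarrow> nat \<Rightarrow> nat) \<Rightarrow> bool" where
  "oracle_on_bits k n f \<longleftrightarrow> (\<forall>K x. K < 2^k \<longrightarrow> x < 2^n \<longrightarrow> f K x < 2^n)"

lemma xor_output_involution [simp]: "xor_output f (xor_output f b) = b"
  by (auto simp: xor_output_def split: prod.splits)

lemma xor_output_key_input [simp]: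
  "fst (xor_output f b) = fst b" "fst (snd (xor_output f b)) = fst (snd b)"
  by (auto simp: xor_output_def split: prod.splits)

lemma xor_output_valid:
  "oracle_on_bits k n f \<Longrightarrow> b \<in> valid k n \<Longrightarrow> xor_output f b \<in> valid k n"
  by (auto simp: xor_output_def valid_def oracle_on_bits_def xor_nat_less_exp split: prod.splits)

lemma sum_xor_output:
  assumes "oracle_on_bits k n f"
  shows "(\<Sum>b\<in>valid k n. g (xor_output f b)) = (\<Sum>b\<in>valid k n. g b)"
  by (rule sum.reindex_bij_witness[where i="xor_output f" and j="xor_output f"])
     (auto simp: xor_output_valid[OF assms])

lemma apply_oracle_eq: "apply_oracle f \<psi> = (\<lambda>b. \<psi> (xor_output f b))"
  by (auto simp: apply_oracle_def xor_output_def fun_eq_iff)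

lemma apply_const_eq: "apply_const a \<psi> = (\<lambda>b. \<psi> (xor_output (\<lambda>_ _. a) b))"
  by (auto simp: apply_const_def xor_output_def fun_eq_iff)

lemma qnorm_xor_output:
  "oracle_on_bits k n f \<Longrightarrow> qnorm k n (\<lambda>b. \<psi> (xor_output f b)) = qnorm k n \<psi>"
  unfolding qnorm_def L2_set_def by (simp add: sum_xor_output[of k n f "\<lambda>b. (cmod (\<psi> b))^2"])

definition oracles_on_bits ::
    "nat \<Rightarrow> nat \<Rightarrow> (nat \<Rightarrow> nat \<Rightarrow> nat) \<Rightarrow> (nat \<Rightarrow> nat) \<Rightarrow> (nat \<Rightarrow> nat) \<Rightarrow> bool" where
  "oracles_on_bits k n E Ev Inv \<longleftrightarrow> oracle_on_bits k n E \<and> oracle_on_bits k n (\<lambda>K. inv (E K))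
     \<and> (\<forall>m. m < 2^n \<longrightarrow> Ev m < 2^n \<and> Inv m < 2^n)"

lemma oracles_on_bits_Ics:
  "E \<in> Ics k n \<Longrightarrow> P \<in> Perms n \<Longrightarrow> oracles_on_bits k n E P (inv P)"
  by (auto simp: oracles_on_bits_def oracle_on_bits_def Perms_def Ics_permutes
      permutes_bits_less permutes_bits_inv_less)

definition wf_op :: "nat \<Rightarrow> nat \<Rightarrow> ('w::finite) op \<Rightarrow> bool" where
  "wf_op k n c \<longleftrightarrow> (\<forall>U. c = Unitary U \<longrightarrow> is_unitary k n U) \<and>
     (\<forall>m. c = ClassEv m \<longrightarrow> m < 2^n) \<and> (\<forall>y. c = ClassInv y \<longrightarrow> y < 2^n)"

lemma wf_adv_iff: "wf_adv k n ops \<longleftrightarrow> (\<forall>c\<in>set ops. wf_op k n c)"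
  by (simp add: wf_adv_def wf_op_def)

lemma wf_adv_Cons [simp]: "wf_adv k n (c # cs) \<longleftrightarrow> wf_op k n c \<and> wf_adv k n cs"
  by (simp add: wf_adv_iff)

lemma qnorm_step:
  assumes "oracles_on_bits k n E Ev Inv" "wf_op k n c"
  shows "qnorm k n (step k n E Ev Inv c \<psi>) = qnorm k n \<psi>"
proof (cases c)
  case (ClassEv m)
  then have "oracle_on_bits k n (\<lambda>_ _. Ev m)"
    using assms by (simp add: oracles_on_bits_def oracle_on_bits_def wf_op_def)
  then show ?thesis using ClassEv by (simp add: apply_const_eq qnorm_xor_output)
next
  case (ClassInv m)
  then have "oracle_on_bits k n (\<lambda>_ _. Inv m)"
    using assms by (simp add: oracles_on_bits_def oracle_on_bits_def wf_op_def)
  then show ?thesis using ClassInv by (simp add: apply_const_eq qnorm_xor_output)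
qed (use assms in \<open>simp_all add: wf_op_def oracles_on_bits_def qnorm_apply_mat apply_oracle_eq
      qnorm_xor_output\<close>)

lemma qnorm_run:
  "oracles_on_bits k n E Ev Inv \<Longrightarrow> wf_adv k n ops \<Longrightarrow>
     qnorm k n (run k n E Ev Inv ops \<psi>) = qnorm k n \<psi>"
  by (induction ops arbitrary: \<psi>) (simp_all add: run_def qnorm_step)

lemma step_diff:
  "step k n E Ev Inv c (\<lambda>b. \<psi> b - \<phi> b) = (\<lambda>b. step k n E Ev Inv c \<psi> b - step k n E Ev Inv c \<phi> b)"
  by (cases c) (auto simp: apply_mat_def sum_subtractf right_diff_distrib apply_oracle_eq apply_const_eq)

definition query_weight :: "nat \<Rightarrow> nat \<Rightarrow> (nat \<Rightarrow> nat \<Rightarrow> bool) \<Rightarrow> ('w::finite) qstate \<Rightarrow> real" where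
  "query_weight k n D \<phi> = (\<Sum>b\<in>valid k n. if D (fst b) (fst (snd b)) then (cmod (\<phi> b))^2 else 0)"

lemma query_weight_nonneg: "0 \<le> query_weight k n D \<phi>"
  unfolding query_weight_def by (intro sum_nonneg) auto

lemma qnorm_oracle_diff:
  fixes \<phi> :: "('w::finite) qstate"
  assumes f: "oracle_on_bits k n f" and f': "oracle_on_bits k n f'"
  shows "qnorm k n (\<lambda>b. \<phi> (xor_output f' b) - \<phi> (xor_output f b))
           \<le> 2 * sqrt (query_weight k n (\<lambda>K x. f' K x \<noteq> f K x) \<phi>)"
proof -
  let ?w = "query_weight k n (\<lambda>K x. f' K x \<noteq> f K x) \<phi>"
  let ?g = "\<lambda>b::'w basis. if f' (fst b) (fst (snd b)) \<noteq> f (fst b) (fst (snd b)) then (cmod (\<phi> b))^2 else 0"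
  have pointwise: "(cmod (\<phi> (xor_output f' b) - \<phi> (xor_output f b)))^2
      \<le> 2 * ?g (xor_output f' b) + 2 * ?g (xor_output f b)" for b
  proof (cases "f' (fst b) (fst (snd b)) = f (fst b) (fst (snd b))")
    case True
    then have "xor_output f' b = xor_output f b" by (auto simp: xor_output_def split: prod.splits)
    then show ?thesis by simp
  next
    case False
    have "(cmod (\<phi> (xor_output f' b) - \<phi> (xor_output f b)))^2
        \<le> (cmod (\<phi> (xor_output f' b)) + cmod (\<phi> (xor_output f b)))^2"
      by (simp add: power_mono norm_triangle_ineq4)
    also have "\<dots> \<le> 2 * (cmod (\<phi> (xor_output f' b)))^2 + 2 * (cmod (\<phi> (xor_output f b)))^2"
      using sum_squares_bound[of "cmod (\<phi> (xor_output f' b))" "cmod (\<phi> (xor_output f b))"]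
      by (simp add: power2_sum)
    finally show ?thesis using False by simp
  qed
  have "(qnorm k n (\<lambda>b. \<phi> (xor_output f' b) - \<phi> (xor_output f b)))^2
      \<le> (\<Sum>b\<in>valid k n. 2 * ?g (xor_output f' b) + 2 * ?g (xor_output f b))"
    unfolding qnorm_square by (rule sum_mono) (rule pointwise)
  also have "\<dots> = 2 * (\<Sum>b\<in>valid k n. ?g (xor_output f' b)) + 2 * (\<Sum>b\<in>valid k n. ?g (xor_output f b))"
    by (simp add: sum.distrib sum_distrib_left)
  also have "\<dots> = 4 * ?w"
    using sum_xor_output[OF f, of ?g] sum_xor_output[OF f', of ?g] by (simp add: query_weight_def)
  also have "\<dots> = (2 * sqrt ?w)^2"
    by (simp add: power_mult_distrib query_weight_nonneg)
  finally show ?thesis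
    by (rule power2_le_imp_le) (simp add: query_weight_nonneg)
qed

definition query_cost ::
    "nat \<Rightarrow> nat \<Rightarrow> (nat \<Rightarrow> nat \<Rightarrow> nat) \<Rightarrow> (nat \<Rightarrow> nat \<Rightarrow> nat) \<Rightarrow> ('w::finite) op \<Rightarrow> 'w qstate \<Rightarrow> real" where
  "query_cost k n E E' c \<phi> = (case c of
      QueryE \<Rightarrow> 2 * sqrt (query_weight k n (\<lambda>K x. E' K x \<noteq> E K x) \<phi>)
    | QueryEinv \<Rightarrow> 2 * sqrt (query_weight k n (\<lambda>K x. inv (E' K) x \<noteq> inv (E K) x) \<phi>)
    | _ \<Rightarrow> 0)"

primrec hybrid_bound :: "nat \<Rightarrow> nat \<Rightarrow> (nat \<Rightarrow> nat \<Rightarrow> nat) \<Rightarrow> (nat \<Rightarrow> nat \<Rightarrow> nat) \<Rightarrow> (nat \<Rightarrow> nat)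
    \<Rightarrow> (nat \<Rightarrow> nat) \<Rightarrow> ('w::finite) op list \<Rightarrow> 'w qstate \<Rightarrow> real" where
  "hybrid_bound k n E E' Ev Inv [] \<phi> = 0"
| "hybrid_bound k n E E' Ev Inv (c # cs) \<phi> =
     query_cost k n E E' c \<phi> + hybrid_bound k n E E' Ev Inv cs (step k n E Ev Inv c \<phi>)"

lemma qnorm_step_diff:
  assumes "oracles_on_bits k n E Ev Inv" "oracles_on_bits k n E' Ev Inv"
  shows "qnorm k n (\<lambda>b. step k n E' Ev Inv c \<phi> b - step k n E Ev Inv c \<phi> b) \<le> query_cost k n E E' c \<phi>"
  using assms
  by (cases c) (auto simp: query_cost_def qnorm_zero apply_oracle_eq oracles_on_bits_def
      intro: qnorm_oracle_diff)

lemma qnorm_run_diff: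
  assumes "oracles_on_bits k n E Ev Inv" "oracles_on_bits k n E' Ev Inv" "wf_adv k n ops"
  shows "qnorm k n (\<lambda>b. run k n E' Ev Inv ops \<psi> b - run k n E Ev Inv ops \<phi> b)
           \<le> qnorm k n (\<lambda>b. \<psi> b - \<phi> b) + hybrid_bound k n E E' Ev Inv ops \<phi>"
  using assms(3)
proof (induction ops arbitrary: \<psi> \<phi>)
  case Nil
  then show ?case by (simp add: run_def)
next
  case (Cons c cs)
  let ?s' = "step k n E' Ev Inv c" and ?s = "step k n E Ev Inv c"
  have "wf_op k n c" using Cons.prems by simp
  have "qnorm k n (\<lambda>b. run k n E' Ev Inv (c # cs) \<psi> b - run k n E Ev Inv (c # cs) \<phi> b)
      = qnorm k n (\<lambda>b. run k n E' Ev Inv cs (?s' \<psi>) b - run k n E Ev Inv cs (?s \<phi>) b)"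
    by (simp add: run_def)
  also have "\<dots> \<le> qnorm k n (\<lambda>b. ?s' \<psi> b - ?s \<phi> b) + hybrid_bound k n E E' Ev Inv cs (?s \<phi>)"
    using Cons by simp
  also have "qnorm k n (\<lambda>b. ?s' \<psi> b - ?s \<phi> b)
      \<le> qnorm k n (\<lambda>b. ?s' \<psi> b - ?s' \<phi> b) + qnorm k n (\<lambda>b. ?s' \<phi> b - ?s \<phi> b)"
    using qnorm_triangle[of k n "\<lambda>b. ?s' \<psi> b - ?s' \<phi> b" "\<lambda>b. ?s' \<phi> b - ?s \<phi> b"] by simp
  also have "qnorm k n (\<lambda>b. ?s' \<psi> b - ?s' \<phi> b) = qnorm k n (\<lambda>b. \<psi> b - \<phi> b)"
    using qnorm_step[OF assms(2) \<open>wf_op k n c\<close>] by (simp flip: step_diff)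
  also have "qnorm k n (\<lambda>b. ?s' \<phi> b - ?s \<phi> b) \<le> query_cost k n E E' c \<phi>"
    by (rule qnorm_step_diff[OF assms(1,2)])
  finally show ?case by simp
qed

text \<open>In the application, \<open>s, t\<close> are the norms of the accepting parts of two unit vectors and \<open>s', t'\<close> those
  of their rejecting parts; the gap \<open>s\<^sup>2 - t\<^sup>2\<close> factors through both parts.\<close>

lemma sq_diff_le_of_unit_pairs:
  fixes s t s' t' u v :: real
  assumes "0 \<le> s" "0 \<le> t" "0 \<le> s'" "0 \<le> t'"
    and "s^2 + s'^2 = 1" "t^2 + t'^2 = 1" "\<bar>s - t\<bar> \<le> u" "\<bar>s' - t'\<bar> \<le> v"
  shows "s^2 - t^2 \<le> sqrt (u^2 + v^2)"
proof -
  have "s^2 - t^2 = (s - t) * (s + t)"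
    by (simp add: power2_eq_square algebra_simps)
  then have accept: "\<bar>s^2 - t^2\<bar> = \<bar>s - t\<bar> * (s + t)"
    using assms(1,2) by (simp add: abs_mult)
  have "s^2 - t^2 = (t' - s') * (t' + s')"
    using assms(5,6) by (simp add: power2_eq_square algebra_simps)
  then have reject: "\<bar>s^2 - t^2\<bar> = \<bar>s' - t'\<bar> * (s' + t')"
    using assms(3,4) by (simp add: abs_mult abs_minus_commute add.commute)
  have "(s + t) * (s' + t') \<le> 2"
  proof -
    have "2 * (s + t) * (s' + t') \<le> (s + t)^2 + (s' + t')^2" by (rule sum_squares_bound)
    also have "\<dots> \<le> (2 * s^2 + 2 * t^2) + (2 * s'^2 + 2 * t'^2)"
      using sum_squares_bound[of s t] sum_squares_bound[of s' t'] by (simp add: power2_sum)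
    also have "\<dots> = 4" using assms(5,6) by linarith
    finally show ?thesis by (simp add: algebra_simps)
  qed
  have "(s^2 - t^2)^2 = \<bar>s^2 - t^2\<bar> * \<bar>s^2 - t^2\<bar>"
    by (simp add: power2_eq_square)
  also have "\<dots> = (\<bar>s - t\<bar> * (s + t)) * (\<bar>s' - t'\<bar> * (s' + t'))"
    using accept reject by metis
  also have "\<dots> = (\<bar>s - t\<bar> * \<bar>s' - t'\<bar>) * ((s + t) * (s' + t'))"
    by (simp add: mult_ac)
  also have "\<dots> \<le> (u * v) * 2"
    using assms \<open>(s + t) * (s' + t') \<le> 2\<close> by (intro mult_mono) (auto intro: mult_mono)
  also have "\<dots> \<le> u^2 + v^2" using sum_squares_bound[of u v] by (simp add: mult_ac)
  finally show ?thesis by (simp add: real_le_rsqrt)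
qed

lemma accept_weight_diff_le_qnorm:
  fixes \<psi> \<phi> :: "('w::finite) qstate"
  assumes "qnorm k n \<psi> = 1" "qnorm k n \<phi> = 1"
  shows "(\<Sum>b\<in>{b\<in>valid k n. acc b}. (cmod (\<psi> b))^2) - (\<Sum>b\<in>{b\<in>valid k n. acc b}. (cmod (\<phi> b))^2)
           \<le> qnorm k n (\<lambda>b. \<psi> b - \<phi> b)"
proof -
  define A where "A = {b\<in>valid k n. acc b}"
  define R where "R = {b\<in>valid k n. \<not> acc b}"
  define l2 where "l2 \<chi> S = L2_set (\<lambda>b. cmod (\<chi> b)) S" for \<chi> :: "'w qstate" and S
  have l2_square: "(l2 \<chi> S)^2 = (\<Sum>b\<in>S. (cmod (\<chi> b))^2)" if "S \<subseteq> valid k n" for \<chi> S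
    using that finite_subset[OF that] by (simp add: l2_def L2_set_def sum_nonneg)
  have qsplit: "(qnorm k n \<chi>)^2 = (l2 \<chi> A)^2 + (l2 \<chi> R)^2" for \<chi>
    using sum.Int_Diff[of "valid k n" "\<lambda>b. (cmod (\<chi> b))^2" "Collect acc"]
    by (simp add: qnorm_square l2_square A_def R_def Int_def set_diff_eq)
  have gap: "\<bar>l2 \<psi> S - l2 \<phi> S\<bar> \<le> l2 (\<lambda>b. \<psi> b - \<phi> b) S" for S
  proof -
    have "l2 \<chi> S \<le> l2 (\<lambda>b. \<chi> b - \<chi>' b) S + l2 \<chi>' S" for \<chi> \<chi>'
    proof -
      have "l2 \<chi> S \<le> L2_set (\<lambda>b. cmod (\<chi> b - \<chi>' b) + cmod (\<chi>' b)) S"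
        unfolding l2_def by (rule L2_set_mono) (auto simp: norm_triangle_sub add.commute)
      also have "\<dots> \<le> l2 (\<lambda>b. \<chi> b - \<chi>' b) S + l2 \<chi>' S"
        unfolding l2_def by (rule L2_set_triangle_ineq)
      finally show ?thesis .
    qed
    from this[of \<psi> \<phi>] this[of \<phi> \<psi>] show ?thesis
      by (simp add: l2_def norm_minus_commute)
  qed
  have units: "l2 \<psi> A ^ 2 + l2 \<psi> R ^ 2 = 1" "l2 \<phi> A ^ 2 + l2 \<phi> R ^ 2 = 1"
    using qsplit[of \<psi>] qsplit[of \<phi>] assms by simp_all
  have "l2 \<psi> A ^ 2 - l2 \<phi> A ^ 2
      \<le> sqrt ((l2 (\<lambda>b. \<psi> b - \<phi> b) A)^2 + (l2 (\<lambda>b. \<psi> b - \<phi> b) R)^2)"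
    by (rule sq_diff_le_of_unit_pairs[OF _ _ _ _ units gap gap]) (simp_all add: l2_def)
  also have "\<dots> = qnorm k n (\<lambda>b. \<psi> b - \<phi> b)"
    by (metis qsplit qnorm_nonneg real_sqrt_abs abs_of_nonneg)
  finally show ?thesis
    by (simp add: l2_square A_def)
qed

section \<open>Reprogramming a permutation on finitely many points\<close>

definition force_point :: "'a \<Rightarrow> 'a \<Rightarrow> ('a \<Rightarrow> 'a) \<Rightarrow> ('a \<Rightarrow> 'a)" where
  "force_point x y \<tau> = Transposition.transpose y (\<tau> x) \<circ> \<tau>"

definition force_points :: "('a \<times> 'a) list \<Rightarrow> ('a \<Rightarrow> 'a) \<Rightarrow> ('a \<Rightarrow> 'a)" where
  "force_points L \<sigma> = fold (\<lambda>(x, y). force_point x y) L \<sigma>"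

definition consistent :: "('a \<times> 'a) list \<Rightarrow> ('a \<Rightarrow> 'a) \<Rightarrow> bool" where
  "consistent L \<rho> \<longleftrightarrow> (\<forall>(x, y)\<in>set L. \<rho> x = y)"

definition consistent_perms :: "'a set \<Rightarrow> ('a \<times> 'a) list \<Rightarrow> ('a \<Rightarrow> 'a) set" where
  "consistent_perms S L = {\<rho>. \<rho> permutes S \<and> consistent L \<rho>}"

lemma force_point_apply [simp]: "force_point x y \<tau> x = y"
  by (simp add: force_point_def)

lemma force_points_Nil [simp]: "force_points [] \<sigma> = \<sigma>"
  by (simp add: force_points_def)

lemma force_points_Cons [simp]: "force_points ((x, y) # L) \<sigma> = force_points L (force_point x y \<sigma>)"
  by (simp add: force_points_def)

lemma force_points_snoc [simp]: "force_points (L @ [(x, y)]) \<sigma> = force_point x y (force_points L \<sigma>)"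
  by (simp add: force_points_def)

lemma consistent_Cons [simp]: "consistent ((x, y) # L) \<rho> \<longleftrightarrow> \<rho> x = y \<and> consistent L \<rho>"
  by (simp add: consistent_def)

lemma consistent_snoc [simp]: "consistent (L @ [(x, y)]) \<rho> \<longleftrightarrow> consistent L \<rho> \<and> \<rho> x = y"
  by (auto simp: consistent_def)

lemma consistentD: "consistent L \<rho> \<Longrightarrow> (x, y) \<in> set L \<Longrightarrow> \<rho> x = y"
  by (auto simp: consistent_def)

lemma consistent_fresh_value:
  "inj \<rho> \<Longrightarrow> consistent L \<rho> \<Longrightarrow> x \<notin> fst ` set L \<Longrightarrow> \<rho> x \<notin> snd ` set L"
  by (force dest: consistentD injD)

lemma finite_consistent_perms [simp]: "finite S \<Longrightarrow> finite (consistent_perms S L)"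
  by (rule finite_subset[OF _ finite_permutations]) (auto simp: consistent_perms_def)

lemma force_point_permutes:
  "\<tau> permutes S \<Longrightarrow> x \<in> S \<Longrightarrow> y \<in> S \<Longrightarrow> force_point x y \<tau> permutes S"
  unfolding force_point_def
  by (rule permutes_compose) (auto intro: permutes_swap_id simp: permutes_in_image)

lemma force_point_inj: "inj \<tau> \<Longrightarrow> inj (force_point x y \<tau>)"
  by (simp add: force_point_def inj_compose)

lemma force_points_permutes:
  "set L \<subseteq> S \<times> S \<Longrightarrow> \<sigma> permutes S \<Longrightarrow> force_points L \<sigma> permutes S"
  by (induction L arbitrary: \<sigma>) (auto simp del: force_points_Cons simp: force_points_def
      intro: force_point_permutes)

lemma force_points_eq_comp:
  "\<exists>\<pi>. \<pi> permutes (snd ` set L \<union> \<sigma> ` fst ` set L) \<and> force_points L \<sigma> = \<pi> \<circ> \<sigma>"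
proof (induction L arbitrary: \<sigma>)
  case Nil
  then show ?case by (auto intro: exI[of _ id])
next
  case (Cons z L)
  obtain x y where z: "z = (x, y)" by force
  define \<tau> where "\<tau> = force_point x y \<sigma>"
  define S where "S = snd ` set (z # L) \<union> \<sigma> ` fst ` set (z # L)"
  obtain \<pi> where \<pi>: "\<pi> permutes (snd ` set L \<union> \<tau> ` fst ` set L)" "force_points L \<tau> = \<pi> \<circ> \<tau>"
    using Cons.IH by blast
  have "\<tau> u \<in> {y, \<sigma> x, \<sigma> u}" for u
    by (auto simp: \<tau>_def force_point_def transpose_def)
  then have "snd ` set L \<union> \<tau> ` fst ` set L \<subseteq> S"
    unfolding S_def z by force
  then have "\<pi> \<circ> Transposition.transpose y (\<sigma> x) permutes S"
    by (intro permutes_compose permutes_swap_id permutes_subset[OF \<pi>(1)]) (auto simp: S_def z)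
  moreover have "force_points (z # L) \<sigma> = \<pi> \<circ> Transposition.transpose y (\<sigma> x) \<circ> \<sigma>"
    using \<pi>(2) by (simp add: z \<tau>_def force_point_def o_assoc)
  ultimately show ?case unfolding S_def by blast
qed

lemma force_points_consistent:
  assumes "inj \<rho>" "consistent L \<rho>" "inj \<sigma>"
  shows "consistent L (force_points L \<sigma>)"
  using assms(2,3)
proof (induction L arbitrary: \<sigma>)
  case Nil
  then show ?case by (simp add: consistent_def)
next
  case (Cons z L)
  obtain x y where z: "z = (x, y)" by force
  define \<tau> where "\<tau> = force_point x y \<sigma>"
  have "inj \<tau>" unfolding \<tau>_def by (rule force_point_inj[OF Cons.prems(2)])
  have IH: "consistent L (force_points L \<tau>)"
    using Cons.IH Cons.prems(1) \<open>inj \<tau>\<close> by (simp add: z)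
  have "force_points L \<tau> x = y"
  proof (cases "x \<in> fst ` set L")
    case True
    then obtain y' where y': "(x, y') \<in> set L" by force
    then have "y' = y" using Cons.prems(1) consistentD[of L \<rho>] by (auto simp: z)
    then show ?thesis using IH y' by (simp add: consistentD)
  next
    case False
    have "y \<notin> snd ` set L"
      using consistent_fresh_value[OF assms(1) _ False] Cons.prems(1) by (simp add: z)
    moreover have "y \<notin> \<tau> ` fst ` set L"
    proof
      assume "y \<in> \<tau> ` fst ` set L"
      then obtain u where "u \<in> fst ` set L" "\<tau> u = y" by blast
      moreover have "\<tau> x = y" by (simp add: \<tau>_def)
      ultimately show False using False \<open>inj \<tau>\<close> by (metis injD)
    qed
    moreover obtain \<pi> where "\<pi> permutes (snd ` set L \<union> \<tau> ` fst ` set L)" "force_points L \<tau> = \<pi> \<circ> \<tau>"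
      using force_points_eq_comp by blast
    ultimately show ?thesis
      by (simp add: \<tau>_def permutes_not_in)
  qed
  then show ?case using IH by (simp add: z \<tau>_def)
qed

lemma force_points_differs:
  assumes "force_points L \<sigma> x \<noteq> \<sigma> x" "inj \<sigma>"
  shows "x \<in> fst ` set L \<or> \<sigma> x \<in> snd ` set L"
proof -
  obtain \<pi> where \<pi>: "\<pi> permutes (snd ` set L \<union> \<sigma> ` fst ` set L)" "force_points L \<sigma> = \<pi> \<circ> \<sigma>"
    using force_points_eq_comp by blast
  then have "\<sigma> x \<in> snd ` set L \<union> \<sigma> ` fst ` set L"
    using assms(1) permutes_not_in[OF \<pi>(1)] by fastforce
  then show ?thesis
    using assms(2) by (auto dest: injD)
qed

lemma inv_force_points_differs:
  assumes "inv (force_points L \<sigma>) y \<noteq> inv \<sigma> y" "bij \<sigma>"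
  shows "y \<in> snd ` set L \<or> y \<in> \<sigma> ` fst ` set L"
proof -
  obtain \<pi> where \<pi>: "\<pi> permutes (snd ` set L \<union> \<sigma> ` fst ` set L)" "force_points L \<sigma> = \<pi> \<circ> \<sigma>"
    using force_points_eq_comp by blast
  then have "inv (force_points L \<sigma>) = inv \<sigma> \<circ> inv \<pi>"
    using assms(2) permutes_bij[OF \<pi>(1)] by (simp add: o_inv_distrib)
  then have "inv \<pi> y \<noteq> y"
    using assms(1) by auto
  then show ?thesis
    using permutes_not_in[OF permutes_inv[OF \<pi>(1)]] by blast
qed

lemma force_point_consistent_perms:
  assumes "x \<notin> fst ` set L" "y \<notin> snd ` set L" "x \<in> S" "y \<in> S" "\<tau> \<in> consistent_perms S L"
  shows "force_point x y \<tau> \<in> consistent_perms S (L @ [(x, y)])"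
proof -
  have \<tau>: "\<tau> permutes S" "consistent L \<tau>" using assms(5) by (auto simp: consistent_perms_def)
  have "force_point x y \<tau> u = v" if "(u, v) \<in> set L" for u v
  proof -
    have "u \<noteq> x" "v \<noteq> y" using assms(1,2) that by force+
    then have "\<tau> u \<noteq> \<tau> x" using permutes_inj[OF \<tau>(1)] by (auto dest: injD)
    then show ?thesis using \<open>v \<noteq> y\<close> consistentD[OF \<tau>(2) that] by (simp add: force_point_def)
  qed
  then show ?thesis
    using force_point_permutes[OF \<tau>(1) assms(3,4)] by (auto simp: consistent_perms_def consistent_def)
qed

lemma consistent_perms_fresh_value:
  assumes "\<tau> \<in> consistent_perms S L" "x \<in> S" "x \<notin> fst ` set L"
  shows "\<tau> x \<in> S - snd ` set L"
proof -
  have \<tau>: "\<tau> permutes S" "consistent L \<tau>" using assms(1) by (auto simp: consistent_perms_def)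
  then show ?thesis
    using consistent_fresh_value[OF permutes_inj[OF \<tau>(1)] \<tau>(2) assms(3)] permutes_in_image[OF \<tau>(1)] assms(2)
    by simp
qed

lemma bij_betw_force_point_fiber:
  assumes "x \<notin> fst ` set L" "y \<notin> snd ` set L" "y \<in> S" "\<rho> \<in> consistent_perms S (L @ [(x, y)])"
  shows "bij_betw (\<lambda>\<tau>. \<tau> x) {\<tau> \<in> consistent_perms S L. force_point x y \<tau> = \<rho>} (S - snd ` set L)"
proof -
  have \<rho>: "\<rho> permutes S" "consistent L \<rho>" "\<rho> x = y" using assms(4) by (auto simp: consistent_perms_def)
  then have "x \<in> S" using assms(3) permutes_not_in by metis
  let ?F = "{\<tau> \<in> consistent_perms S L. force_point x y \<tau> = \<rho>}"
  show ?thesis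
  proof (rule bij_betw_byWitness[where f'="\<lambda>w. Transposition.transpose y w \<circ> \<rho>"])
    show "\<forall>\<tau>\<in>?F. Transposition.transpose y (\<tau> x) \<circ> \<rho> = \<tau>"
      by (auto simp: force_point_def o_assoc)
    show "\<forall>w\<in>S - snd ` set L. (Transposition.transpose y w \<circ> \<rho>) x = w"
      using \<rho>(3) by simp
    show "(\<lambda>\<tau>. \<tau> x) ` ?F \<subseteq> S - snd ` set L"
      using consistent_perms_fresh_value[OF _ \<open>x \<in> S\<close> assms(1)] by auto
    show "(\<lambda>w. Transposition.transpose y w \<circ> \<rho>) ` (S - snd ` set L) \<subseteq> ?F"
    proof clarify
      fix w assume w: "w \<in> S" "w \<notin> snd ` set L"
      let ?\<tau> = "Transposition.transpose y w \<circ> \<rho>"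
      have "?\<tau> permutes S"
        using \<rho>(1) w(1) assms(3) by (intro permutes_compose permutes_swap_id)
      moreover have "consistent L ?\<tau>"
        unfolding consistent_def
      proof clarify
        fix u v assume "(u, v) \<in> set L"
        moreover from this have "v \<noteq> y" "v \<noteq> w" using assms(2) w(2) by force+
        ultimately show "?\<tau> u = v" using consistentD[OF \<rho>(2)] by simp
      qed
      moreover have "force_point x y ?\<tau> = \<rho>"
        using \<rho>(3) by (simp add: force_point_def fun_eq_iff)
      ultimately show "?\<tau> \<in> consistent_perms S L \<and> force_point x y ?\<tau> = \<rho>"
        by (simp add: consistent_perms_def)
    qed
  qed
qed

lemma sum_force_point:
  fixes S :: "'a set"
  assumes "finite S" "x \<in> S" "y \<in> S" "\<rho>\<^sub>0 \<in> consistent_perms S (L @ [(x, y)])"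
  obtains m :: nat where "m > 0"
    "\<And>h :: ('a \<Rightarrow> 'a) \<Rightarrow> real. (\<Sum>\<tau>\<in>consistent_perms S L. h (force_point x y \<tau>))
            = real m * (\<Sum>\<rho>\<in>consistent_perms S (L @ [(x, y)]). h \<rho>)"
proof (cases "x \<in> fst ` set L")
  case True
  then obtain y' where "(x, y') \<in> set L" by force
  moreover have "consistent L \<rho>\<^sub>0" "\<rho>\<^sub>0 x = y" using assms(4) by (auto simp: consistent_perms_def)
  ultimately have "(x, y) \<in> set L" by (auto dest: consistentD)
  then have "consistent_perms S (L @ [(x, y)]) = consistent_perms S L"
    and "\<tau> \<in> consistent_perms S L \<Longrightarrow> force_point x y \<tau> = \<tau>" for \<tau>
    by (auto simp: consistent_perms_def force_point_def dest: consistentD)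
  then show ?thesis by (intro that[of 1]) simp_all
next
  case False
  have \<rho>\<^sub>0: "inj \<rho>\<^sub>0" "consistent L \<rho>\<^sub>0" "\<rho>\<^sub>0 x = y"
    using assms(4) by (auto simp: consistent_perms_def permutes_inj)
  then have fresh: "y \<notin> snd ` set L"
    using consistent_fresh_value[OF \<rho>\<^sub>0(1,2) False] by simp
  have card_fiber: "card {\<tau> \<in> consistent_perms S L. force_point x y \<tau> = \<rho>} = card (S - snd ` set L)"
    if "\<rho> \<in> consistent_perms S (L @ [(x, y)])" for \<rho>
    using bij_betw_force_point_fiber[OF False fresh assms(3) that] by (rule bij_betw_same_card)
  show ?thesis
  proof (rule that)
    show "card (S - snd ` set L) > 0"
      using assms(1,3) fresh by (auto simp: card_gt_0_iff)
    fix h :: "('a \<Rightarrow> 'a) \<Rightarrow> real"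
    have "(\<Sum>\<tau>\<in>consistent_perms S L. h (force_point x y \<tau>))
        = (\<Sum>\<rho>\<in>consistent_perms S (L @ [(x, y)]).
             \<Sum>\<tau>\<in>{\<tau> \<in> consistent_perms S L. force_point x y \<tau> = \<rho>}. h (force_point x y \<tau>))"
      using force_point_consistent_perms[OF False fresh assms(2,3)] assms(1)
      by (intro sum.group[symmetric]) auto
    also have "\<dots> = (\<Sum>\<rho>\<in>consistent_perms S (L @ [(x, y)]). real (card (S - snd ` set L)) * h \<rho>)"
      by (intro sum.cong refl) (simp add: card_fiber)
    finally show "(\<Sum>\<tau>\<in>consistent_perms S L. h (force_point x y \<tau>))
        = real (card (S - snd ` set L)) * (\<Sum>\<rho>\<in>consistent_perms S (L @ [(x, y)]). h \<rho>)"
      by (simp add: sum_distrib_left)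
  qed
qed

text \<open>Forcing the points of a consistent list \<open>L\<close> maps the uniform distribution on the permutations
  of \<open>S\<close> to the uniform distribution on those consistent with \<open>L\<close>.\<close>

lemma sum_force_points:
  fixes h :: "('a \<Rightarrow> 'a) \<Rightarrow> real"
  assumes "finite S" "set L \<subseteq> S \<times> S" "\<rho>\<^sub>0 \<in> consistent_perms S L"
  shows "(\<Sum>\<sigma>\<in>{\<sigma>. \<sigma> permutes S}. h (force_points L \<sigma>)) * card (consistent_perms S L)
           = card {\<sigma>. \<sigma> permutes S} * (\<Sum>\<rho>\<in>consistent_perms S L. h \<rho>)"
  using assms(2,3)
proof (induction L arbitrary: h rule: rev_induct)
  case Nil
  have "consistent_perms S [] = {\<sigma>. \<sigma> permutes S}" by (simp add: consistent_perms_def consistent_def)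
  then show ?case by (simp add: mult.commute)
next
  case (snoc z L)
  obtain x y where z: "z = (x, y)" by force
  have xy: "x \<in> S" "y \<in> S" and L: "set L \<subseteq> S \<times> S" using snoc.prems(1) by (auto simp: z)
  have \<rho>\<^sub>0: "\<rho>\<^sub>0 \<in> consistent_perms S L" using snoc.prems(2) by (simp add: consistent_perms_def z)
  obtain m where m: "m > 0" "\<And>h :: ('a \<Rightarrow> 'a) \<Rightarrow> real. (\<Sum>\<tau>\<in>consistent_perms S L. h (force_point x y \<tau>))
      = real m * (\<Sum>\<rho>\<in>consistent_perms S (L @ [(x, y)]). h \<rho>)"
    using sum_force_point[OF assms(1) xy snoc.prems(2)[unfolded z]] by blast
  have card: "real (card (consistent_perms S L)) = real m * card (consistent_perms S (L @ [(x, y)]))"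
    using m(2)[of "\<lambda>_. 1"] by simp
  have "(\<Sum>\<sigma>\<in>{\<sigma>. \<sigma> permutes S}. h (force_points (L @ [z]) \<sigma>)) * card (consistent_perms S (L @ [z])) * m
      = (\<Sum>\<sigma>\<in>{\<sigma>. \<sigma> permutes S}. (h \<circ> force_point x y) (force_points L \<sigma>)) * card (consistent_perms S L)"
    by (simp add: z card mult_ac)
  also have "\<dots> = card {\<sigma>. \<sigma> permutes S} * (\<Sum>\<rho>\<in>consistent_perms S L. (h \<circ> force_point x y) \<rho>)"
    by (rule snoc.IH[OF L \<rho>\<^sub>0])
  also have "\<dots> = card {\<sigma>. \<sigma> permutes S} * (\<Sum>\<rho>\<in>consistent_perms S (L @ [z]). h \<rho>) * m"
    using m(2)[of h] by (simp add: z mult_ac)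
  finally show ?case using m(1) by simp
qed

section \<open>Transcripts of the classical queries\<close>

text \<open>On \<open>n\<close>-bit strings, \<open>FX[E](K\<^sub>1, K\<^sub>2)\<close> is \<open>xor_conj n K\<^sub>2 (E K\<^sub>1)\<close>.\<close>

definition xor_conj :: "nat \<Rightarrow> nat \<Rightarrow> (nat \<Rightarrow> nat) \<Rightarrow> (nat \<Rightarrow> nat)" where
  "xor_conj n K \<rho> = (\<lambda>u. if u < 2^n then xor (\<rho> (xor u K)) K else u)"

lemma xor_conj_less: "\<rho> permutes bits n \<Longrightarrow> K < 2^n \<Longrightarrow> u < 2^n \<Longrightarrow> xor_conj n K \<rho> u < 2^n"
  by (simp add: xor_conj_def permutes_bits_less xor_nat_less_exp)

lemma xor_conj_involution:
  assumes "\<rho> permutes bits n" "K < 2^n"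
  shows "xor_conj n K (xor_conj n K \<rho>) = \<rho>"
proof
  fix u
  show "xor_conj n K (xor_conj n K \<rho>) u = \<rho> u"
  proof (cases "u < 2^n")
    case True
    then show ?thesis
      using assms by (simp add: xor_conj_def xor_nat_less_exp permutes_bits_less)
  next
    case False
    then show ?thesis
      using permutes_not_in[OF assms(1)] by (simp add: xor_conj_def)
  qed
qed

lemma xor_conj_permutes:
  assumes "\<rho> permutes bits n" "K < 2^n"
  shows "xor_conj n K \<rho> permutes bits n"
proof (rule bij_imp_permutes)
  have inv_left: "xor_conj n K (inv \<sigma>) (xor_conj n K \<sigma> u) = u"
    if "\<sigma> permutes bits n" "u < 2^n" for \<sigma> u
    using that assms(2) xor_conj_less[OF that(1) assms(2) that(2)]
    by (simp add: xor_conj_def permutes_inverses)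
  show "bij_betw (xor_conj n K \<rho>) (bits n) (bits n)"
    by (rule bij_betw_byWitness[where f'="xor_conj n K (inv \<rho>)"])
       (use inv_left[OF assms(1)] inv_left[OF permutes_inv[OF assms(1)]] permutes_inv_inv[OF assms(1)]
          xor_conj_less[OF assms] xor_conj_less[OF permutes_inv[OF assms(1)] assms(2)] in auto)
qed (simp add: xor_conj_def)

definition is_classical :: "'w op \<Rightarrow> bool" where
  "is_classical c \<longleftrightarrow> (case c of ClassEv _ \<Rightarrow> True | ClassInv _ \<Rightarrow> True | _ \<Rightarrow> False)"

definition query_pair :: "(nat \<Rightarrow> nat) \<Rightarrow> 'w op \<Rightarrow> nat \<times> nat" where
  "query_pair P c = (case c of ClassEv a \<Rightarrow> (a, P a) | ClassInv b \<Rightarrow> (inv P b, b) | _ \<Rightarrow> (0, 0))"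

definition transcript :: "'w op list \<Rightarrow> (nat \<Rightarrow> nat) \<Rightarrow> (nat \<times> nat) list" where
  "transcript ops P = map (query_pair P) (filter is_classical ops)"

definition xor_pairs :: "nat \<Rightarrow> (nat \<times> nat) list \<Rightarrow> (nat \<times> nat) list" where
  "xor_pairs K L = map (\<lambda>(u, v). (xor u K, xor v K)) L"

lemma length_transcript: "length (transcript ops P) = num_classical ops"
  by (simp add: transcript_def num_classical_def is_classical_def[abs_def])

lemma transcript_in_bits:
  assumes "P \<in> Perms n" "wf_adv k n ops"
  shows "set (transcript ops P) \<subseteq> bits n \<times> bits n"
  using assms
  by (auto simp: transcript_def query_pair_def is_classical_def wf_adv_def Perms_def
      permutes_bits_less permutes_bits_inv_less split: op.splits)

lemma xor_pairs_in_bits: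
  "set L \<subseteq> bits n \<times> bits n \<Longrightarrow> K < 2^n \<Longrightarrow> set (xor_pairs K L) \<subseteq> bits n \<times> bits n"
  by (auto simp: xor_pairs_def xor_nat_less_exp)

lemma consistent_transcript_iff:
  assumes "P \<in> Perms n" "P' \<in> Perms n" "wf_adv k n ops"
  shows "consistent (transcript ops P) P' \<longleftrightarrow> transcript ops P' = transcript ops P"
proof -
  have "consistent (transcript ops P) P'
      \<longleftrightarrow> (\<forall>c\<in>set (filter is_classical ops). P' (fst (query_pair P c)) = snd (query_pair P c))"
    by (simp add: consistent_def transcript_def split_beta)
  also have "\<dots> \<longleftrightarrow> (\<forall>c\<in>set (filter is_classical ops). query_pair P' c = query_pair P c)"
  proof (intro ball_cong refl)
    fix c assume c: "c \<in> set (filter is_classical ops)"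
    show "P' (fst (query_pair P c)) = snd (query_pair P c) \<longleftrightarrow> query_pair P' c = query_pair P c"
      by (cases c) (use c assms permutes_inv_eq[of P' "bits n"] in
          \<open>auto simp: query_pair_def is_classical_def Perms_def\<close>)
  qed
  also have "\<dots> \<longleftrightarrow> transcript ops P' = transcript ops P"
    by (simp add: transcript_def map_eq_conv)
  finally show ?thesis .
qed

lemma consistent_xor_pairs_transcript_iff:
  assumes "P \<in> Perms n" "\<rho> \<in> Perms n" "wf_adv k n ops" "K < 2^n"
  shows "consistent (xor_pairs K (transcript ops P)) \<rho> \<longleftrightarrow> transcript ops (xor_conj n K \<rho>) = transcript ops P"
proof -
  have "consistent (xor_pairs K (transcript ops P)) \<rho> \<longleftrightarrow> consistent (transcript ops P) (xor_conj n K \<rho>)"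
    using transcript_in_bits[OF assms(1,3)]
    by (fastforce simp: consistent_def xor_pairs_def xor_conj_def xor_eq_iff)
  also have "\<dots> \<longleftrightarrow> transcript ops (xor_conj n K \<rho>) = transcript ops P"
    using assms xor_conj_permutes by (intro consistent_transcript_iff) (auto simp: Perms_def)
  finally show ?thesis .
qed

lemma run_cong_classical:
  assumes "\<And>a. ClassEv a \<in> set ops \<Longrightarrow> Ev a = Ev' a" "\<And>b. ClassInv b \<in> set ops \<Longrightarrow> Inv b = Inv' b"
  shows "run k n E Ev Inv ops \<psi> = run k n E Ev' Inv' ops \<psi>"
  using assms
proof (induction ops arbitrary: \<psi>)
  case (Cons c cs)
  have "step k n E Ev Inv c \<psi> = step k n E Ev' Inv' c \<psi>"
    using Cons.prems by (cases c) auto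
  then show ?case using Cons by (simp add: run_def)
qed (simp add: run_def)

lemma run_FX_eq_run_perm:
  assumes "E K1 permutes bits n" "consistent (xor_pairs K2 (transcript ops P)) (E K1)"
  shows "run k n E (FX E K1 K2) (FX_inv E K1 K2) ops \<psi> = run k n E P (inv P) ops \<psi>"
proof (rule run_cong_classical)
  have sat: "E K1 (xor u K2) = xor v K2" if "(u, v) \<in> set (transcript ops P)" for u v
    using assms(2) that by (force simp: consistent_def xor_pairs_def)
  show "FX E K1 K2 a = P a" if "ClassEv a \<in> set ops" for a
    using sat[of a "P a"] that by (force simp: FX_def transcript_def query_pair_def is_classical_def)
  show "FX_inv E K1 K2 b = inv P b" if "ClassInv b \<in> set ops" for b
  proof -
    have "E K1 (xor (inv P b) K2) = xor b K2"
      using sat[of "inv P b" b] that by (force simp: transcript_def query_pair_def is_classical_def)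
    then have "inv (E K1) (xor b K2) = xor (inv P b) K2"
      using permutes_inv_eq[OF assms(1)] by blast
    then show ?thesis by (simp add: FX_inv_def)
  qed
qed

section \<open>Coupling the real world with the ideal world\<close>

definition reprogram ::
    "nat \<Rightarrow> nat \<Rightarrow> 'w op list \<Rightarrow> (nat \<Rightarrow> nat \<Rightarrow> nat) \<Rightarrow> (nat \<Rightarrow> nat) \<Rightarrow> (nat \<Rightarrow> nat \<Rightarrow> nat)" where
  "reprogram K1 K2 ops E P = E(K1 := force_points (xor_pairs K2 (transcript ops P)) (E K1))"

lemma xor_conj_in_consistent_perms:
  assumes "P \<in> Perms n" "wf_adv k n ops" "K2 < 2^n"
  shows "xor_conj n K2 P \<in> consistent_perms (bits n) (xor_pairs K2 (transcript ops P))"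
proof -
  have "xor_conj n K2 P \<in> Perms n"
    using assms(1,3) xor_conj_permutes by (simp add: Perms_def)
  then show ?thesis
    using consistent_xor_pairs_transcript_iff[OF assms(1) _ assms(2,3)] xor_conj_involution[OF _ assms(3)]
      assms(1) by (auto simp: consistent_perms_def Perms_def)
qed

lemma reprogram_Ics:
  assumes "E \<in> Ics k n" "P \<in> Perms n" "wf_adv k n ops" "K1 < 2^k" "K2 < 2^n"
  shows "reprogram K1 K2 ops E P \<in> Ics k n"
  unfolding reprogram_def
  using assms xor_pairs_in_bits[OF transcript_in_bits[OF assms(2,3)] assms(5)]
  by (intro Ics_update force_points_permutes Ics_permutes) auto

lemma reprogram_consistent:
  assumes "E \<in> Ics k n" "P \<in> Perms n" "wf_adv k n ops" "K1 < 2^k" "K2 < 2^n"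
  shows "consistent (xor_pairs K2 (transcript ops P)) (reprogram K1 K2 ops E P K1)"
  unfolding reprogram_def fun_upd_same
  using xor_conj_in_consistent_perms[OF assms(2,3,5)] Ics_permutes[OF assms(1,4)]
  by (intro force_points_consistent[where \<rho>="xor_conj n K2 P"])
     (auto simp: consistent_perms_def permutes_inj)

lemma accept_prob_reprogram:
  assumes "E \<in> Ics k n" "P \<in> Perms n" "wf_adv k n ops" "K1 < 2^k" "K2 < 2^n"
  defines "E' \<equiv> reprogram K1 K2 ops E P"
  shows "accept_prob k n E' P (inv P) w0 ops acc
       = accept_prob k n E' (FX E' K1 K2) (FX_inv E' K1 K2) w0 ops acc"
  unfolding accept_prob_def E'_def
  using run_FX_eq_run_perm Ics_permutes[OF reprogram_Ics[OF assms(1-5)] assms(4)]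
    reprogram_consistent[OF assms(1-5)] by metis

lemma sum_Ics_update:
  assumes "K1 < 2^k"
  shows "(\<Sum>E\<in>Ics k n. G E) = (\<Sum>E\<^sub>0\<in>{E\<in>Ics k n. E K1 = id}. \<Sum>\<sigma>\<in>Perms n. G (E\<^sub>0(K1 := \<sigma>)))"
proof -
  have "bij_betw (\<lambda>(E\<^sub>0, \<sigma>). E\<^sub>0(K1 := \<sigma>)) ({E \<in> Ics k n. E K1 = id} \<times> Perms n) (Ics k n)"
    by (rule bij_betw_byWitness[where f'="\<lambda>E. (E(K1 := id), E K1)"])
       (use assms in \<open>auto simp: fun_eq_iff Perms_def Ics_permutes intro!: Ics_update\<close>)
  then show ?thesis
    by (simp add: sum.cartesian_product sum.reindex_bij_betw[symmetric] split_beta)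
qed

lemma sum_Ics_force_points:
  fixes G :: "(nat \<Rightarrow> nat \<Rightarrow> nat) \<Rightarrow> real"
  assumes "K1 < 2^k" "set L \<subseteq> bits n \<times> bits n" "\<rho>\<^sub>0 \<in> consistent_perms (bits n) L"
  shows "(\<Sum>E\<in>Ics k n. G (E(K1 := force_points L (E K1)))) * card (consistent_perms (bits n) L)
       = card (Perms n) * (\<Sum>E\<in>Ics k n. if E K1 \<in> consistent_perms (bits n) L then G E else 0)"
proof -
  let ?C = "consistent_perms (bits n) L" and ?I\<^sub>0 = "{E\<in>Ics k n. E K1 = id}"
  have "(\<Sum>E\<in>Ics k n. G (E(K1 := force_points L (E K1)))) * card ?C
      = (\<Sum>E\<^sub>0\<in>?I\<^sub>0. (\<Sum>\<sigma>\<in>Perms n. G (E\<^sub>0(K1 := force_points L \<sigma>))) * card ?C)"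
    by (simp add: sum_Ics_update[OF assms(1)] sum_distrib_right)
  also have "\<dots> = (\<Sum>E\<^sub>0\<in>?I\<^sub>0. card (Perms n) * (\<Sum>\<rho>\<in>?C. G (E\<^sub>0(K1 := \<rho>))))"
    using sum_force_points[OF finite_bits assms(2,3)] by (intro sum.cong refl) (simp add: Perms_def)
  also have "\<dots> = card (Perms n) * (\<Sum>E\<^sub>0\<in>?I\<^sub>0. \<Sum>\<sigma>\<in>Perms n. if \<sigma> \<in> ?C then G (E\<^sub>0(K1 := \<sigma>)) else 0)"
  proof -
    have "Perms n \<inter> ?C = ?C" by (auto simp: Perms_def consistent_perms_def)
    then have "(\<Sum>\<sigma>\<in>Perms n. if \<sigma> \<in> ?C then G (E\<^sub>0(K1 := \<sigma>)) else 0) = (\<Sum>\<rho>\<in>?C. G (E\<^sub>0(K1 := \<rho>)))"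
      for E\<^sub>0 using sum.inter_restrict[of "Perms n" "\<lambda>\<sigma>. G (E\<^sub>0(K1 := \<sigma>))" ?C] by simp
    then show ?thesis by (simp add: sum_distrib_left)
  qed
  also have "\<dots> = card (Perms n) * (\<Sum>E\<in>Ics k n. if E K1 \<in> ?C then G E else 0)"
    by (simp add: sum_Ics_update[OF assms(1)])
  finally show ?thesis .
qed

lemma card_consistent_perms_xor_pairs:
  assumes "Q \<in> Perms n" "wf_adv k n ops" "K2 < 2^n"
  shows "card (consistent_perms (bits n) (xor_pairs K2 (transcript ops Q)))
       = card {P\<in>Perms n. transcript ops P = transcript ops Q}"
proof (rule bij_betw_same_card[of "xor_conj n K2"], rule bij_betw_byWitness[where f'="xor_conj n K2"])
  let ?C = "consistent_perms (bits n) (xor_pairs K2 (transcript ops Q))"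
  let ?S = "{P\<in>Perms n. transcript ops P = transcript ops Q}"
  have iff: "\<rho> \<in> ?C \<longleftrightarrow> \<rho> \<in> Perms n \<and> transcript ops (xor_conj n K2 \<rho>) = transcript ops Q" for \<rho>
    using consistent_xor_pairs_transcript_iff[OF assms(1) _ assms(2,3), of \<rho>]
    by (auto simp: consistent_perms_def Perms_def)
  have perm: "xor_conj n K2 \<rho> \<in> Perms n" if "\<rho> \<in> Perms n" for \<rho>
    using that xor_conj_permutes[OF _ assms(3)] by (simp add: Perms_def)
  have inv: "xor_conj n K2 (xor_conj n K2 \<rho>) = \<rho>" if "\<rho> \<in> Perms n" for \<rho>
    using that xor_conj_involution[OF _ assms(3)] by (simp add: Perms_def)
  show "\<forall>\<rho>\<in>?C. xor_conj n K2 (xor_conj n K2 \<rho>) = \<rho>" "\<forall>P\<in>?S. xor_conj n K2 (xor_conj n K2 P) = P"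
    using inv by (auto simp: iff)
  show "xor_conj n K2 ` ?C \<subseteq> ?S" "xor_conj n K2 ` ?S \<subseteq> ?C"
    using perm inv by (auto simp: iff)
qed

lemma sum_Perms_inverse_card_consistent_perms:
  assumes "\<rho>\<^sub>0 \<in> Perms n" "wf_adv k n ops" "K2 < 2^n"
  defines "C P \<equiv> consistent_perms (bits n) (xor_pairs K2 (transcript ops P))"
  shows "(\<Sum>P\<in>Perms n. if \<rho>\<^sub>0 \<in> C P then 1 / real (card (C P)) else 0) = 1"
proof -
  define Q where "Q = xor_conj n K2 \<rho>\<^sub>0"
  define S where "S = {P\<in>Perms n. transcript ops P = transcript ops Q}"
  have "Q \<in> Perms n"
    using assms(1,3) xor_conj_permutes by (simp add: Q_def Perms_def)
  then have "Q \<in> S" "finite S" by (simp_all add: S_def)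
  have "\<rho>\<^sub>0 \<in> C P \<longleftrightarrow> P \<in> S" if "P \<in> Perms n" for P
    using consistent_xor_pairs_transcript_iff[OF that assms(1,2,3)] assms(1) that
    by (auto simp: C_def S_def Q_def consistent_perms_def Perms_def)
  moreover have "C P = C Q" if "P \<in> S" for P
    using that by (simp add: C_def S_def)
  ultimately have "(\<Sum>P\<in>Perms n. if \<rho>\<^sub>0 \<in> C P then 1 / real (card (C P)) else 0)
      = (\<Sum>P\<in>Perms n. if P \<in> S then 1 / real (card (C Q)) else 0)"
    by (intro sum.cong) auto
  also have "\<dots> = real (card S) / real (card (C Q))"
  proof -
    have "Perms n \<inter> S = S" by (auto simp: S_def)
    then show ?thesis
      using sum.inter_restrict[of "Perms n" "\<lambda>_. 1 / real (card (C Q))" S] by simp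
  qed
  also have "card (C Q) = card S"
    unfolding C_def S_def by (rule card_consistent_perms_xor_pairs[OF \<open>Q \<in> Perms n\<close> assms(2,3)])
  finally show ?thesis
    using \<open>Q \<in> S\<close> \<open>finite S\<close> by (auto simp: card_gt_0_iff)
qed

lemma coupling:
  fixes ops :: "('w::finite) op list"
  assumes "K1 < 2^k" "K2 < 2^n" "wf_adv k n ops"
  shows "card (Perms n) * (\<Sum>E\<in>Ics k n. accept_prob k n E (FX E K1 K2) (FX_inv E K1 K2) w0 ops acc)
       = (\<Sum>P\<in>Perms n. \<Sum>E\<in>Ics k n. accept_prob k n (reprogram K1 K2 ops E P) P (inv P) w0 ops acc)"
proof -
  define g where "g E = accept_prob k n E (FX E K1 K2) (FX_inv E K1 K2) w0 ops acc" for E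
  define C where "C P = consistent_perms (bits n) (xor_pairs K2 (transcript ops P))" for P
  define M where "M = real (card (Perms n))"
  have C_pos: "card (C P) > 0" if "P \<in> Perms n" for P
    using xor_conj_in_consistent_perms[OF that assms(3,2)] by (auto simp: C_def card_gt_0_iff)
  have "(\<Sum>P\<in>Perms n. \<Sum>E\<in>Ics k n. accept_prob k n (reprogram K1 K2 ops E P) P (inv P) w0 ops acc)
      = (\<Sum>P\<in>Perms n. \<Sum>E\<in>Ics k n. g (reprogram K1 K2 ops E P))"
    unfolding g_def using accept_prob_reprogram[OF _ _ assms(3,1,2)] by (intro sum.cong refl) simp
  also have "\<dots> = (\<Sum>P\<in>Perms n. M / card (C P) * (\<Sum>E\<in>Ics k n. if E K1 \<in> C P then g E else 0))"
  proof (intro sum.cong refl)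
    fix P assume P: "P \<in> Perms n"
    have "(\<Sum>E\<in>Ics k n. g (reprogram K1 K2 ops E P)) * card (C P)
        = M * (\<Sum>E\<in>Ics k n. if E K1 \<in> C P then g E else 0)"
      unfolding reprogram_def C_def M_def
      using xor_conj_in_consistent_perms[OF P assms(3,2)]
        xor_pairs_in_bits[OF transcript_in_bits[OF P assms(3)] assms(2)]
      by (intro sum_Ics_force_points[OF assms(1)])
    then show "(\<Sum>E\<in>Ics k n. g (reprogram K1 K2 ops E P))
        = M / card (C P) * (\<Sum>E\<in>Ics k n. if E K1 \<in> C P then g E else 0)"
      using C_pos[OF P] by (simp add: field_simps)
  qed
  also have "\<dots> = (\<Sum>P\<in>Perms n. \<Sum>E\<in>Ics k n. M * g E * (if E K1 \<in> C P then 1 / card (C P) else 0))"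
    by (auto simp: sum_distrib_left intro!: sum.cong)
  also have "\<dots> = (\<Sum>E\<in>Ics k n. M * g E * (\<Sum>P\<in>Perms n. if E K1 \<in> C P then 1 / card (C P) else 0))"
    by (subst sum.swap) (simp add: sum_distrib_left)
  also have "\<dots> = (\<Sum>E\<in>Ics k n. M * g E)"
  proof (intro sum.cong refl)
    fix E assume "E \<in> Ics k n"
    then have "E K1 \<in> Perms n" using Ics_permutes[OF _ assms(1)] by (simp add: Perms_def)
    then have "(\<Sum>P\<in>Perms n. if E K1 \<in> C P then 1 / real (card (C P)) else 0) = 1"
      unfolding C_def by (rule sum_Perms_inverse_card_consistent_perms[OF _ assms(3,2)])
    then show "M * g E * (\<Sum>P\<in>Perms n. if E K1 \<in> C P then 1 / card (C P) else 0) = M * g E"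
      by simp
  qed
  finally show ?thesis
    by (simp add: M_def g_def sum_distrib_left)
qed

lemma sum_swap_pairs:
  "(\<Sum>a\<in>A. \<Sum>b\<in>B. \<Sum>c\<in>C. \<Sum>d\<in>D. f a b c d) = (\<Sum>c\<in>C. \<Sum>d\<in>D. \<Sum>a\<in>A. \<Sum>b\<in>B. f a b c d)"
proof -
  have "(\<Sum>a\<in>A. \<Sum>b\<in>B. \<Sum>c\<in>C. \<Sum>d\<in>D. f a b c d) = (\<Sum>a\<in>A. \<Sum>c\<in>C. \<Sum>b\<in>B. \<Sum>d\<in>D. f a b c d)"
    by (rule sum.cong[OF refl], rule sum.swap)
  also have "\<dots> = (\<Sum>c\<in>C. \<Sum>a\<in>A. \<Sum>b\<in>B. \<Sum>d\<in>D. f a b c d)"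
    by (rule sum.swap)
  also have "\<dots> = (\<Sum>c\<in>C. \<Sum>a\<in>A. \<Sum>d\<in>D. \<Sum>b\<in>B. f a b c d)"
    by (rule sum.cong[OF refl], rule sum.cong[OF refl], rule sum.swap)
  also have "\<dots> = (\<Sum>c\<in>C. \<Sum>d\<in>D. \<Sum>a\<in>A. \<Sum>b\<in>B. f a b c d)"
    by (rule sum.cong[OF refl], rule sum.swap)
  finally show ?thesis .
qed

lemma sum_coupling:
  fixes ops :: "('w::finite) op list"
  assumes "wf_adv k n ops"
  shows "card (Perms n) * (\<Sum>E\<in>Ics k n. \<Sum>K1\<in>bits k. \<Sum>K2\<in>bits n.
           accept_prob k n E (FX E K1 K2) (FX_inv E K1 K2) w0 ops acc)
       = (\<Sum>P\<in>Perms n. \<Sum>E\<in>Ics k n. \<Sum>K1\<in>bits k. \<Sum>K2\<in>bits n.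
           accept_prob k n (reprogram K1 K2 ops E P) P (inv P) w0 ops acc)"
proof -
  have "(\<Sum>E\<in>Ics k n. \<Sum>K1\<in>bits k. \<Sum>K2\<in>bits n. accept_prob k n E (FX E K1 K2) (FX_inv E K1 K2) w0 ops acc)
      = (\<Sum>K1\<in>bits k. \<Sum>K2\<in>bits n. \<Sum>E\<in>Ics k n. accept_prob k n E (FX E K1 K2) (FX_inv E K1 K2) w0 ops acc)"
    by (subst sum.swap) (rule sum.cong[OF refl], rule sum.swap)
  then have "card (Perms n) * (\<Sum>E\<in>Ics k n. \<Sum>K1\<in>bits k. \<Sum>K2\<in>bits n.
           accept_prob k n E (FX E K1 K2) (FX_inv E K1 K2) w0 ops acc)
      = (\<Sum>K1\<in>bits k. \<Sum>K2\<in>bits n.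
           card (Perms n) * (\<Sum>E\<in>Ics k n. accept_prob k n E (FX E K1 K2) (FX_inv E K1 K2) w0 ops acc))"
    by (simp add: sum_distrib_left)
  also have "\<dots> = (\<Sum>K1\<in>bits k. \<Sum>K2\<in>bits n. \<Sum>P\<in>Perms n. \<Sum>E\<in>Ics k n.
           accept_prob k n (reprogram K1 K2 ops E P) P (inv P) w0 ops acc)"
    using assms by (intro sum.cong refl) (simp add: coupling)
  also have "\<dots> = (\<Sum>P\<in>Perms n. \<Sum>E\<in>Ics k n. \<Sum>K1\<in>bits k. \<Sum>K2\<in>bits n.
           accept_prob k n (reprogram K1 K2 ops E P) P (inv P) w0 ops acc)"
    by (rule sum_swap_pairs)
  finally show ?thesis .
qed

lemma adv_sprp_na_FX_eq:
  fixes ops :: "('w::finite) op list"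
  assumes "wf_adv k n ops"
  shows "adv_sprp_na_FX k n w0 ops acc
       = (\<Sum>P\<in>Perms n. \<Sum>E\<in>Ics k n. \<Sum>K1\<in>bits k. \<Sum>K2\<in>bits n.
            accept_prob k n (reprogram K1 K2 ops E P) P (inv P) w0 ops acc - accept_prob k n E P (inv P) w0 ops acc)
         / (card (Ics k n) * card (Perms n) * 2^k * 2^n)"
proof -
  define I M :: real where "I = card (Ics k n)" and "M = card (Perms n)"
  define N :: real where "N = 2^k * 2^n"
  define real_world where "real_world = (\<Sum>E\<in>Ics k n. \<Sum>K1\<in>bits k. \<Sum>K2\<in>bits n.
      accept_prob k n E (FX E K1 K2) (FX_inv E K1 K2) w0 ops acc)"
  define ideal_world where "ideal_world = (\<Sum>E\<in>Ics k n. \<Sum>P\<in>Perms n. accept_prob k n E P (inv P) w0 ops acc)"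
  have "I > 0" "M > 0" "N > 0"
    using card_Ics_pos card_Perms_pos by (simp_all add: I_def M_def N_def)
  have "ideal_world = (\<Sum>P\<in>Perms n. \<Sum>E\<in>Ics k n. accept_prob k n E P (inv P) w0 ops acc)"
    unfolding ideal_world_def by (rule sum.swap)
  then have "N * ideal_world = (\<Sum>P\<in>Perms n. \<Sum>E\<in>Ics k n. \<Sum>K1\<in>bits k. \<Sum>K2\<in>bits n.
      accept_prob k n E P (inv P) w0 ops acc)"
    by (simp add: N_def card_bits sum_distrib_left mult_ac)
  moreover have "adv_sprp_na_FX k n w0 ops acc = real_world / (I * N) - ideal_world / (I * M)"
    by (simp add: adv_sprp_na_FX_def real_world_def ideal_world_def I_def M_def N_def mult.assoc)
  then have "adv_sprp_na_FX k n w0 ops acc = (M * real_world - N * ideal_world) / (I * M * N)"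
    using \<open>I > 0\<close> \<open>M > 0\<close> \<open>N > 0\<close> by (simp add: field_simps)
  ultimately show ?thesis
    using sum_coupling[OF assms, of w0 acc]
    by (simp add: real_world_def sum_subtractf I_def M_def N_def mult_ac)
qed

section \<open>Bounding the query costs\<close>

lemma reprogram_differs:
  assumes "reprogram K1 K2 ops E P K x \<noteq> E K x" "inj (E K1)"
  shows "K = K1 \<and> (\<exists>(u, v)\<in>set (transcript ops P). x = xor u K2 \<or> x = inv (E K1) (xor v K2))"
proof -
  have K: "K = K1" using assms(1) by (auto simp: reprogram_def split: if_splits)
  then have "x \<in> fst ` set (xor_pairs K2 (transcript ops P)) \<or> E K1 x \<in> snd ` set (xor_pairs K2 (transcript ops P))"
    using assms by (intro force_points_differs) (auto simp: reprogram_def)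
  then obtain u v where "(u, v) \<in> set (transcript ops P)" "x = xor u K2 \<or> E K1 x = xor v K2"
    by (force simp: xor_pairs_def)
  then show ?thesis
    using K inv_f_eq[OF assms(2)] by blast
qed

lemma inv_reprogram_differs:
  assumes "inv (reprogram K1 K2 ops E P K) y \<noteq> inv (E K) y" "bij (E K1)"
  shows "K = K1 \<and> (\<exists>(u, v)\<in>set (transcript ops P). y = xor v K2 \<or> y = E K1 (xor u K2))"
proof -
  have K: "K = K1" using assms(1) by (auto simp: reprogram_def split: if_splits)
  then have "y \<in> snd ` set (xor_pairs K2 (transcript ops P)) \<or> y \<in> E K1 ` fst ` set (xor_pairs K2 (transcript ops P))"
    using assms by (intro inv_force_points_differs) (auto simp: reprogram_def)
  then show ?thesis
    using K by (force simp: xor_pairs_def)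
qed

definition point_weight :: "nat \<Rightarrow> nat \<Rightarrow> nat \<Rightarrow> nat \<Rightarrow> ('w::finite) qstate \<Rightarrow> real" where
  "point_weight k n K x \<phi> = query_weight k n (\<lambda>K' x'. K' = K \<and> x' = x) \<phi>"

lemma query_weight_le_point_weights:
  fixes \<phi> :: "('w::finite) qstate"
  assumes "finite Z" "\<And>K x. D K x \<Longrightarrow> K = K1 \<and> (\<exists>z\<in>Z. x = f z \<or> x = g z)"
  shows "query_weight k n D \<phi> \<le> (\<Sum>z\<in>Z. point_weight k n K1 (f z) \<phi> + point_weight k n K1 (g z) \<phi>)"
proof -
  let ?c = "\<lambda>b::'w basis. (cmod (\<phi> b))^2"
  let ?at = "\<lambda>x b::'w basis. if fst b = K1 \<and> fst (snd b) = x then ?c b else 0"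
  have pointwise: "(if D (fst b) (fst (snd b)) then ?c b else 0) \<le> (\<Sum>z\<in>Z. ?at (f z) b + ?at (g z) b)" for b
  proof (cases "D (fst b) (fst (snd b))")
    case True
    then obtain z where z: "z \<in> Z" "fst b = K1" "fst (snd b) = f z \<or> fst (snd b) = g z"
      using assms(2) by blast
    then have "?c b \<le> ?at (f z) b + ?at (g z) b" by auto
    also have "\<dots> \<le> (\<Sum>z\<in>Z. ?at (f z) b + ?at (g z) b)"
      using z(1) assms(1) by (intro member_le_sum) auto
    finally show ?thesis using True by simp
  qed (simp add: sum_nonneg)
  have "query_weight k n D \<phi> \<le> (\<Sum>b\<in>valid k n. \<Sum>z\<in>Z. ?at (f z) b + ?at (g z) b)"
    unfolding query_weight_def by (rule sum_mono) (rule pointwise)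
  also have "\<dots> = (\<Sum>z\<in>Z. point_weight k n K1 (f z) \<phi> + point_weight k n K1 (g z) \<phi>)"
    by (subst sum.swap) (simp add: point_weight_def query_weight_def sum.distrib)
  finally show ?thesis .
qed

lemma sum_point_weight:
  fixes \<phi> :: "('w::finite) qstate"
  assumes "qnorm k n \<phi> = 1"
  shows "(\<Sum>K\<in>bits k. \<Sum>x\<in>bits n. point_weight k n K x \<phi>) = 1"
proof -
  let ?c = "\<lambda>b::'w basis. (cmod (\<phi> b))^2"
  have "(\<Sum>K\<in>bits k. \<Sum>x\<in>bits n. point_weight k n K x \<phi>)
      = (\<Sum>b\<in>valid k n. \<Sum>K\<in>bits k. \<Sum>x\<in>bits n. if fst b = K \<and> fst (snd b) = x then ?c b else 0)"
    unfolding point_weight_def query_weight_def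
    by (subst (2) sum.swap, subst sum.swap) (rule refl)
  also have "\<dots> = (\<Sum>b\<in>valid k n. ?c b)"
  proof (intro sum.cong refl)
    fix b :: "'w basis" assume "b \<in> valid k n"
    then have "fst b \<in> bits k" "fst (snd b) \<in> bits n" by (auto simp: valid_def)
    have "(\<Sum>K\<in>bits k. \<Sum>x\<in>bits n. if fst b = K \<and> fst (snd b) = x then ?c b else 0)
        = (\<Sum>K\<in>bits k. if fst b = K then \<Sum>x\<in>bits n. if fst (snd b) = x then ?c b else 0 else 0)"
      by (intro sum.cong refl) auto
    then show "(\<Sum>K\<in>bits k. \<Sum>x\<in>bits n. if fst b = K \<and> fst (snd b) = x then ?c b else 0) = ?c b"
      using \<open>fst b \<in> bits k\<close> \<open>fst (snd b) \<in> bits n\<close> by simp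
  qed
  also have "\<dots> = 1" using assms qnorm_square[of k n \<phi>] by simp
  finally show ?thesis .
qed

text \<open>Since \<open>K\<^sub>2 \<mapsto> f K\<^sub>1 K\<^sub>2 z\<close> is a bijection of the \<open>n\<close>-bit strings, as \<open>(K\<^sub>1, K\<^sub>2)\<close> ranges over
  all keys the inputs \<open>(K\<^sub>1, f K\<^sub>1 K\<^sub>2 z)\<close> run through every key-input pair exactly once, and so
  carry total weight 1.\<close>

lemma sum_query_weight_le:
  fixes \<phi> :: "('w::finite) qstate"
  assumes "qnorm k n \<phi> = 1" "finite Z"
    and "\<And>K1 K2 K x. K1 \<in> bits k \<Longrightarrow> K2 \<in> bits n \<Longrightarrow> D K1 K2 K x \<Longrightarrow>
           K = K1 \<and> (\<exists>z\<in>Z. x = f K1 K2 z \<or> x = g K1 K2 z)"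
    and "\<And>K1 z. K1 \<in> bits k \<Longrightarrow> z \<in> Z \<Longrightarrow> bij_betw (\<lambda>K2. f K1 K2 z) (bits n) (bits n)"
    and "\<And>K1 z. K1 \<in> bits k \<Longrightarrow> z \<in> Z \<Longrightarrow> bij_betw (\<lambda>K2. g K1 K2 z) (bits n) (bits n)"
  shows "(\<Sum>K1\<in>bits k. \<Sum>K2\<in>bits n. query_weight k n (D K1 K2) \<phi>) \<le> 2 * card Z"
proof -
  have sum_bij: "(\<Sum>K1\<in>bits k. \<Sum>K2\<in>bits n. point_weight k n K1 (h K1 K2) \<phi>) = 1"
    if bij: "\<And>K1. K1 \<in> bits k \<Longrightarrow> bij_betw (h K1) (bits n) (bits n)" for h
  proof -
    have "(\<Sum>K2\<in>bits n. point_weight k n K1 (h K1 K2) \<phi>) = (\<Sum>x\<in>bits n. point_weight k n K1 x \<phi>)"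
      if "K1 \<in> bits k" for K1
      using sum.reindex_bij_betw[OF bij[OF that]] .
    then show ?thesis
      using sum_point_weight[OF assms(1)] by simp
  qed
  have "(\<Sum>K1\<in>bits k. \<Sum>K2\<in>bits n. query_weight k n (D K1 K2) \<phi>)
      \<le> (\<Sum>K1\<in>bits k. \<Sum>K2\<in>bits n. \<Sum>z\<in>Z.
            point_weight k n K1 (f K1 K2 z) \<phi> + point_weight k n K1 (g K1 K2 z) \<phi>)"
    by (intro sum_mono query_weight_le_point_weights assms(2,3))
  also have "\<dots> = (\<Sum>K1\<in>bits k. \<Sum>z\<in>Z. \<Sum>K2\<in>bits n.
            point_weight k n K1 (f K1 K2 z) \<phi> + point_weight k n K1 (g K1 K2 z) \<phi>)"
    by (intro sum.cong refl sum.swap)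
  also have "\<dots> = (\<Sum>z\<in>Z. \<Sum>K1\<in>bits k. \<Sum>K2\<in>bits n.
            point_weight k n K1 (f K1 K2 z) \<phi> + point_weight k n K1 (g K1 K2 z) \<phi>)"
    by (rule sum.swap)
  also have "\<dots> = (\<Sum>z\<in>Z. (\<Sum>K1\<in>bits k. \<Sum>K2\<in>bits n. point_weight k n K1 (f K1 K2 z) \<phi>)
                         + (\<Sum>K1\<in>bits k. \<Sum>K2\<in>bits n. point_weight k n K1 (g K1 K2 z) \<phi>))"
    by (simp add: sum.distrib)
  also have "\<dots> = (\<Sum>z\<in>Z. 2)"
  proof (intro sum.cong refl)
    fix z assume "z \<in> Z"
    then show "(\<Sum>K1\<in>bits k. \<Sum>K2\<in>bits n. point_weight k n K1 (f K1 K2 z) \<phi>)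
        + (\<Sum>K1\<in>bits k. \<Sum>K2\<in>bits n. point_weight k n K1 (g K1 K2 z) \<phi>) = 2"
      using sum_bij[of "\<lambda>K1 K2. f K1 K2 z"] sum_bij[of "\<lambda>K1 K2. g K1 K2 z"] assms(4,5) by simp
  qed
  finally show ?thesis by simp
qed

lemma sum_sqrt_le:
  assumes "\<And>a. a \<in> A \<Longrightarrow> 0 \<le> w a" "(\<Sum>a\<in>A. w a) \<le> B"
  shows "(\<Sum>a\<in>A. sqrt (w a)) \<le> sqrt (card A) * sqrt B"
proof -
  have "(\<Sum>a\<in>A. sqrt (w a)) = (\<Sum>a\<in>A. \<bar>sqrt (w a)\<bar> * \<bar>1\<bar>)"
    using assms(1) by simp
  also have "\<dots> \<le> L2_set (\<lambda>a. sqrt (w a)) A * L2_set (\<lambda>a. 1) A"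
    by (rule L2_set_mult_ineq)
  also have "L2_set (\<lambda>a. sqrt (w a)) A = sqrt (\<Sum>a\<in>A. w a)"
    unfolding L2_set_def using assms(1) by (simp cong: sum.cong)
  also have "L2_set (\<lambda>a. 1::real) A = sqrt (card A)"
    by (simp add: L2_set_constant)
  finally have "(\<Sum>a\<in>A. sqrt (w a)) \<le> sqrt (\<Sum>a\<in>A. w a) * sqrt (card A)" .
  also have "\<dots> \<le> sqrt B * sqrt (card A)"
    using assms(2) by (intro mult_right_mono) simp_all
  finally show ?thesis by (simp add: mult.commute)
qed

lemma sum_query_weight_reprogram_le:
  fixes \<phi> :: "('w::finite) qstate" and ops :: "'w op list"
  assumes "E \<in> Ics k n" "P \<in> Perms n" "wf_adv k n ops" "qnorm k n \<phi> = 1"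
  shows "(\<Sum>K1\<in>bits k. \<Sum>K2\<in>bits n. query_weight k n (\<lambda>K x. reprogram K1 K2 ops E P K x \<noteq> E K x) \<phi>)
           \<le> 2 * num_classical ops"
proof -
  let ?Z = "set (transcript ops P)"
  have Z_bits: "fst z < 2^n" "snd z < 2^n" if "z \<in> ?Z" for z
    using transcript_in_bits[OF assms(2,3)] that by auto
  have E_perm: "E K1 permutes bits n" if "K1 \<in> bits k" for K1
    using Ics_permutes[OF assms(1)] that by simp
  have "(\<Sum>K1\<in>bits k. \<Sum>K2\<in>bits n. query_weight k n (\<lambda>K x. reprogram K1 K2 ops E P K x \<noteq> E K x) \<phi>)
      \<le> 2 * card ?Z"
  proof (rule sum_query_weight_le[OF assms(4) finite_set,
        where f="\<lambda>K1 K2 z. xor (fst z) K2" and g="\<lambda>K1 K2 z. inv (E K1) (xor (snd z) K2)"])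
    show "K = K1 \<and> (\<exists>z\<in>?Z. x = xor (fst z) K2 \<or> x = inv (E K1) (xor (snd z) K2))"
      if "K1 \<in> bits k" "reprogram K1 K2 ops E P K x \<noteq> E K x" for K1 K2 K x
      using reprogram_differs[OF that(2) permutes_inj[OF E_perm[OF that(1)]]] by force
    show "bij_betw (\<lambda>K2. xor (fst z) K2) (bits n) (bits n)" if "z \<in> ?Z" for z
      by (rule bij_betw_xor_bits[OF Z_bits(1)[OF that]])
    show "bij_betw (\<lambda>K2. inv (E K1) (xor (snd z) K2)) (bits n) (bits n)" if "K1 \<in> bits k" "z \<in> ?Z" for K1 z
      using bij_betw_trans[OF bij_betw_xor_bits[OF Z_bits(2)[OF that(2)]]
          permutes_imp_bij[OF permutes_inv[OF E_perm[OF that(1)]]]]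
      by (simp add: o_def)
  qed
  then show ?thesis
    using card_length[of "transcript ops P"] by (simp add: length_transcript)
qed

lemma sum_query_weight_inv_reprogram_le:
  fixes \<phi> :: "('w::finite) qstate" and ops :: "'w op list"
  assumes "E \<in> Ics k n" "P \<in> Perms n" "wf_adv k n ops" "qnorm k n \<phi> = 1"
  shows "(\<Sum>K1\<in>bits k. \<Sum>K2\<in>bits n.
            query_weight k n (\<lambda>K y. inv (reprogram K1 K2 ops E P K) y \<noteq> inv (E K) y) \<phi>)
           \<le> 2 * num_classical ops"
proof -
  let ?Z = "set (transcript ops P)"
  have Z_bits: "fst z < 2^n" "snd z < 2^n" if "z \<in> ?Z" for z
    using transcript_in_bits[OF assms(2,3)] that by auto
  have E_perm: "E K1 permutes bits n" if "K1 \<in> bits k" for K1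
    using Ics_permutes[OF assms(1)] that by simp
  have "(\<Sum>K1\<in>bits k. \<Sum>K2\<in>bits n.
          query_weight k n (\<lambda>K y. inv (reprogram K1 K2 ops E P K) y \<noteq> inv (E K) y) \<phi>) \<le> 2 * card ?Z"
  proof (rule sum_query_weight_le[OF assms(4) finite_set,
        where f="\<lambda>K1 K2 z. xor (snd z) K2" and g="\<lambda>K1 K2 z. E K1 (xor (fst z) K2)"])
    show "K = K1 \<and> (\<exists>z\<in>?Z. y = xor (snd z) K2 \<or> y = E K1 (xor (fst z) K2))"
      if "K1 \<in> bits k" "inv (reprogram K1 K2 ops E P K) y \<noteq> inv (E K) y" for K1 K2 K y
      using inv_reprogram_differs[OF that(2) permutes_bij[OF E_perm[OF that(1)]]] by force
    show "bij_betw (\<lambda>K2. xor (snd z) K2) (bits n) (bits n)" if "z \<in> ?Z" for z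
      by (rule bij_betw_xor_bits[OF Z_bits(2)[OF that]])
    show "bij_betw (\<lambda>K2. E K1 (xor (fst z) K2)) (bits n) (bits n)" if "K1 \<in> bits k" "z \<in> ?Z" for K1 z
      using bij_betw_trans[OF bij_betw_xor_bits[OF Z_bits(1)[OF that(2)]] permutes_imp_bij[OF E_perm[OF that(1)]]]
      by (simp add: o_def)
  qed
  then show ?thesis
    using card_length[of "transcript ops P"] by (simp add: length_transcript)
qed

lemma sum_query_cost_reprogram:
  fixes \<phi> :: "('w::finite) qstate" and ops :: "'w op list"
  assumes "E \<in> Ics k n" "P \<in> Perms n" "wf_adv k n ops" "qnorm k n \<phi> = 1"
  shows "(\<Sum>K\<in>bits k \<times> bits n. query_cost k n E (reprogram (fst K) (snd K) ops E P) c \<phi>)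
           \<le> 2 * sqrt (2^k * 2^n) * sqrt (2 * real (num_classical ops))"
proof -
  have bound: "(\<Sum>K\<in>bits k \<times> bits n. 2 * sqrt (query_weight k n (D K) \<phi>))
      \<le> 2 * sqrt (2^k * 2^n) * sqrt (2 * real (num_classical ops))"
    if "(\<Sum>K1\<in>bits k. \<Sum>K2\<in>bits n. query_weight k n (D (K1, K2)) \<phi>) \<le> 2 * num_classical ops" for D
  proof -
    have "(\<Sum>K\<in>bits k \<times> bits n. sqrt (query_weight k n (D K) \<phi>))
        \<le> sqrt (card (bits k \<times> bits n)) * sqrt (2 * real (num_classical ops))"
      using that by (intro sum_sqrt_le) (auto simp: query_weight_nonneg sum.cartesian_product)
    then show ?thesis
      by (simp add: sum_distrib_left[symmetric] card_cartesian_product card_bits)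
  qed
  show ?thesis
  proof (cases c)
    case QueryE
    then show ?thesis
      using bound[of "\<lambda>K K' x. reprogram (fst K) (snd K) ops E P K' x \<noteq> E K' x"]
        sum_query_weight_reprogram_le[OF assms] by (simp add: query_cost_def)
  next
    case QueryEinv
    then show ?thesis
      using bound[of "\<lambda>K K' y. inv (reprogram (fst K) (snd K) ops E P K') y \<noteq> inv (E K') y"]
        sum_query_weight_inv_reprogram_le[OF assms] by (simp add: query_cost_def)
  qed (simp_all add: query_cost_def)
qed

lemma sum_hybrid_bound_le:
  fixes ops :: "('w::finite) op list" and B :: real
  assumes "oracles_on_bits k n E Ev Inv" "wf_adv k n ops" "qnorm k n \<phi> = 1"
    and "\<And>(\<phi>::'w qstate) c. qnorm k n \<phi> = 1 \<Longrightarrow> (\<Sum>K\<in>KS. query_cost k n E (E' K) c \<phi>) \<le> B"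
  shows "(\<Sum>K\<in>KS. hybrid_bound k n E (E' K) Ev Inv ops \<phi>) \<le> num_quantum ops * B"
  using assms(2,3)
proof (induction ops arbitrary: \<phi>)
  case Nil
  then show ?case by (simp add: num_quantum_def)
next
  case (Cons c cs)
  have "wf_op k n c" using Cons.prems(1) by simp
  have "qnorm k n (step k n E Ev Inv c \<phi>) = 1"
    using qnorm_step[OF assms(1) \<open>wf_op k n c\<close>, of \<phi>] Cons.prems(2) by simp
  then have IH: "(\<Sum>K\<in>KS. hybrid_bound k n E (E' K) Ev Inv cs (step k n E Ev Inv c \<phi>)) \<le> num_quantum cs * B"
    using Cons by simp
  have "c \<noteq> QueryE \<Longrightarrow> c \<noteq> QueryEinv \<Longrightarrow> query_cost k n E (E' K) c \<phi> = 0" for K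
    by (cases c) (simp_all add: query_cost_def)
  then have "(\<Sum>K\<in>KS. query_cost k n E (E' K) c \<phi>) \<le> (if c = QueryE \<or> c = QueryEinv then B else 0)"
    using assms(4)[OF Cons.prems(2)] by auto
  then have "(\<Sum>K\<in>KS. hybrid_bound k n E (E' K) Ev Inv (c # cs) \<phi>)
      \<le> (if c = QueryE \<or> c = QueryEinv then B else 0) + num_quantum cs * B"
    using IH by (simp add: sum.distrib)
  also have "\<dots> = num_quantum (c # cs) * B"
    by (simp add: num_quantum_def algebra_simps)
  finally show ?case .
qed

lemma accept_prob_diff_le_hybrid_bound:
  fixes ops :: "('w::finite) op list"
  assumes "oracles_on_bits k n E Ev Inv" "oracles_on_bits k n E' Ev Inv" "wf_adv k n ops"
  shows "accept_prob k n E' Ev Inv w0 ops acc - accept_prob k n E Ev Inv w0 ops acc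
           \<le> hybrid_bound k n E E' Ev Inv ops (init_state w0)"
proof -
  let ?\<psi>\<^sub>0 = "init_state w0 :: 'w qstate"
  have "accept_prob k n E' Ev Inv w0 ops acc - accept_prob k n E Ev Inv w0 ops acc
      \<le> qnorm k n (\<lambda>b. run k n E' Ev Inv ops ?\<psi>\<^sub>0 b - run k n E Ev Inv ops ?\<psi>\<^sub>0 b)"
    unfolding accept_prob_def
    by (rule accept_weight_diff_le_qnorm) (simp_all add: qnorm_run assms qnorm_init_state)
  also have "\<dots> \<le> qnorm k n (\<lambda>b. ?\<psi>\<^sub>0 b - ?\<psi>\<^sub>0 b) + hybrid_bound k n E E' Ev Inv ops ?\<psi>\<^sub>0"
    by (rule qnorm_run_diff[OF assms])
  finally show ?thesis by (simp add: qnorm_zero)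
qed

lemma sqrt_bound_eq:
  fixes p q :: nat
  shows "real p * (2 * sqrt (2^k * 2^n) * sqrt (2 * real q))
       = 2^k * 2^n * sqrt (8 * real p ^ 2 * real q / 2 ^ (k + n))"
proof -
  define N :: real where "N = 2^k * 2^n"
  have "N > 0" "2 ^ (k + n) = N" by (simp_all add: N_def power_add)
  have "8 * real p ^ 2 * real q = (2 * real p)^2 * (2 * real q)"
    by (simp add: power2_eq_square)
  then have "sqrt (8 * real p ^ 2 * real q / 2 ^ (k + n)) = sqrt ((2 * real p)^2) * sqrt (2 * real q) / sqrt N"
    unfolding \<open>2 ^ (k + n) = N\<close> by (simp only: real_sqrt_divide real_sqrt_mult)
  also have "\<dots> = 2 * real p * sqrt (2 * real q) / sqrt N"
    by (simp only: real_sqrt_abs)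
  finally have "N * sqrt (8 * real p ^ 2 * real q / 2 ^ (k + n)) = 2 * real p * sqrt (2 * real q) * (N / sqrt N)"
    by simp
  also have "N / sqrt N = sqrt N"
    using \<open>N > 0\<close> by (simp add: real_div_sqrt)
  finally show ?thesis
    by (simp add: N_def mult_ac)
qed

lemma sum_accept_prob_reprogram_le:
  fixes ops :: "('w::finite) op list" and w0 :: 'w
  assumes "E \<in> Ics k n" "P \<in> Perms n" "wf_adv k n ops" "num_quantum ops \<le> p" "num_classical ops \<le> q"
  shows "(\<Sum>K1\<in>bits k. \<Sum>K2\<in>bits n. accept_prob k n (reprogram K1 K2 ops E P) P (inv P) w0 ops acc
            - accept_prob k n E P (inv P) w0 ops acc)
         \<le> 2^k * 2^n * sqrt (8 * real p ^ 2 * real q / 2 ^ (k + n))"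
proof -
  define E' where "E' K = reprogram (fst K) (snd K) ops E P" for K
  have "E' K \<in> Ics k n" if "K \<in> bits k \<times> bits n" for K
    using reprogram_Ics[OF assms(1-3)] that by (auto simp: E'_def)
  then have "accept_prob k n (E' K) P (inv P) w0 ops acc - accept_prob k n E P (inv P) w0 ops acc
      \<le> hybrid_bound k n E (E' K) P (inv P) ops (init_state w0)" if "K \<in> bits k \<times> bits n" for K
    using that assms(1-3) by (intro accept_prob_diff_le_hybrid_bound oracles_on_bits_Ics)
  then have "(\<Sum>K1\<in>bits k. \<Sum>K2\<in>bits n. accept_prob k n (reprogram K1 K2 ops E P) P (inv P) w0 ops acc
            - accept_prob k n E P (inv P) w0 ops acc)
      \<le> (\<Sum>K\<in>bits k \<times> bits n. hybrid_bound k n E (E' K) P (inv P) ops (init_state w0))"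
    by (simp add: sum.cartesian_product E'_def split_beta sum_mono)
  also have "\<dots> \<le> num_quantum ops * (2 * sqrt (2^k * 2^n) * sqrt (2 * real (num_classical ops)))"
    unfolding E'_def
    by (intro sum_hybrid_bound_le oracles_on_bits_Ics sum_query_cost_reprogram assms qnorm_init_state)
  also have "\<dots> \<le> real p * (2 * sqrt (2^k * 2^n) * sqrt (2 * real q))"
    using assms(4,5) by (intro mult_mono mult_left_mono) auto
  also have "\<dots> = 2^k * 2^n * sqrt (8 * real p ^ 2 * real q / 2 ^ (k + n))"
    by (rule sqrt_bound_eq)
  finally show ?thesis .
qed

theorem theorem2:
  fixes k n p q :: nat
    and w0 :: "'w::finite"
    and ops :: "'w op list"
    and acc :: "'w basis \<Rightarrow> bool"
  assumes "wf_adv k n ops"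
    and "num_quantum ops \<le> p"
    and "num_classical ops \<le> q"
  shows "adv_sprp_na_FX k n w0 ops acc \<le> sqrt (8 * real p ^ 2 * real q / 2 ^ (k + n))"
proof -
  define bound where "bound = sqrt (8 * real p ^ 2 * real q / 2 ^ (k + n))"
  define D :: real where "D = card (Ics k n) * card (Perms n) * 2^k * 2^n"
  have "D > 0" using card_Ics_pos card_Perms_pos by (simp add: D_def)
  have "adv_sprp_na_FX k n w0 ops acc
      = (\<Sum>P\<in>Perms n. \<Sum>E\<in>Ics k n. \<Sum>K1\<in>bits k. \<Sum>K2\<in>bits n.
            accept_prob k n (reprogram K1 K2 ops E P) P (inv P) w0 ops acc - accept_prob k n E P (inv P) w0 ops acc) / D"
    unfolding D_def by (rule adv_sprp_na_FX_eq[OF assms(1)])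
  also have "\<dots> \<le> (\<Sum>P\<in>Perms n. \<Sum>E\<in>Ics k n. 2^k * 2^n * bound) / D"
    unfolding bound_def using assms \<open>D > 0\<close>
    by (intro divide_right_mono sum_mono sum_accept_prob_reprogram_le) auto
  also have "\<dots> = D * bound / D"
    by (simp add: D_def mult_ac)
  also have "\<dots> = bound"
    using \<open>D > 0\<close> by simp
  finally show ?thesis unfolding bound_def .
qed

end
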